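(* The following problem is decidable: given Fibonacci-synchronized sequences $(a(n))_{n\ge0}$ and $(b(n))_{n\ge0}$ (each specified by a synchronized automaton), decide whether $(a(n))_{n\ge 0}$ is a permutation of $(b(n))_{n\ge 0}$, i.e., whether there is a bijection $\sigma:\mathbb{N}\to\mathbb{N}$ with $a(n)=b(\sigma(n))$ for all $n$.
   Context: $\mathbb{N}=\{0,1,2,\ldots\}$. The Fibonacci (Zeckendorf) representation of $n\in\mathbb{N}$ is the binary string $e_1\cdots e_t$ with no two consecutive $1$'s and $n=\sum_{i=1}^t e_iF_{t-i+2}$ (where $F_0=0,F_1=1,F_k=F_{k-1}+F_{k-2}$), leading zeros being allowed/ignored. A sequence $s:\mathbb{N}\to\mathbb{N}$ is Fibonacci-synchronized if there is a deterministic finite automaton over the alphabet $\{0,1\}^2$ which, reading the Fibonacci representations of a pair $(n,x)$ in parallel (most significant digit first, the shorter one padded with leading zeros), accepts if and only if $x=s(n)$; such an automaton is called a synchronized automaton for $s$. *)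

theory Defs
  imports Main "HOL-Number_Theory.Fib" "HOL-Library.Nat_Bijection"
begin

text \<open>A digit string is a list of booleans, most significant digit first
 (True = 1). Value: digit e_i (1-based, i = 1..t) has weight F_(t-i+2).\<close>

definition zeck_val :: "bool list \<Rightarrow> nat" where
  "zeck_val w = (\<Sum>i<length w. if w ! i then fib (length w - i + 1) else 0)"

definition no_adj_ones :: "bool list \<Rightarrow> bool" where
  "no_adj_ones w \<longleftrightarrow> (\<forall>i. Suc i < length w \<longrightarrow> \<not> (w ! i \<and> w ! Suc i))"

definition fib_rep :: "nat \<Rightarrow> bool list" where
  "fib_rep n = (THE w. no_adj_ones w \<and> (w = [] \<or> hd w) \<and> zeck_val w = n)"

definition pad_pair :: "bool list \<Rightarrow> bool list \<Rightarrow> (bool \<times> bool) list" where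
  "pad_pair u v = (let m = max (length u) (length v) in
     zip (replicate (m - length u) False @ u) (replicate (m - length v) False @ v))"

text \<open>DFA k q0 tr fin: states 0..k-1, initial state q0, transition from state q
 on letter (c1,c2) is tr ! (4*q + 2*c1 + c2), final states given by fin.\<close>
datatype dfa = DFA (nstates: nat) (init: nat) (trans: "nat list") (final: "bool list")

definition dfa_wf :: "dfa \<Rightarrow> bool" where
  "dfa_wf A \<longleftrightarrow> init A < nstates A \<and> length (trans A) = 4 * nstates A
     \<and> (\<forall>q \<in> set (trans A). q < nstates A) \<and> length (final A) = nstates A"

definition dfa_step :: "dfa \<Rightarrow> nat \<Rightarrow> bool \<times> bool \<Rightarrow> nat" where
  "dfa_step A q c = trans A ! (4 * q + 2 * (if fst c then 1 else 0) + (if snd c then 1 else 0))"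

definition dfa_accepts :: "dfa \<Rightarrow> (bool \<times> bool) list \<Rightarrow> bool" where
  "dfa_accepts A w \<longleftrightarrow> final A ! foldl (dfa_step A) (init A) w"

definition fib_synchronized_by :: "dfa \<Rightarrow> (nat \<Rightarrow> nat) \<Rightarrow> bool" where
  "fib_synchronized_by A s \<longleftrightarrow> dfa_wf A \<and>
     (\<forall>n x. dfa_accepts A (pad_pair (fib_rep n) (fib_rep x)) \<longleftrightarrow> x = s n)"

definition dfa_code :: "dfa \<Rightarrow> nat" where
  "dfa_code A = list_encode ([nstates A, init A] @ trans A
       @ map (\<lambda>b. if b then 1 else 0) (final A))"

definition is_perm_of :: "(nat \<Rightarrow> nat) \<Rightarrow> (nat \<Rightarrow> nat) \<Rightarrow> bool" where
  "is_perm_of a b \<longleftrightarrow> (\<exists>\<sigma>::nat \<Rightarrow> nat. bij \<sigma> \<and> (\<forall>n. a n = b (\<sigma> n)))"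

datatype recf = Zero | Succ | Proj nat | Comp recf "recf list" | PrimRec recf recf | Minim recf

inductive rf_eval :: "recf \<Rightarrow> nat list \<Rightarrow> nat \<Rightarrow> bool" where
  zero: "rf_eval Zero xs 0"
| succ: "rf_eval Succ (x # xs) (Suc x)"
| proj: "i < length xs \<Longrightarrow> rf_eval (Proj i) xs (xs ! i)"
| comp: "length ys = length gs \<Longrightarrow> (\<forall>i < length gs. rf_eval (gs ! i) xs (ys ! i))
          \<Longrightarrow> rf_eval f ys z \<Longrightarrow> rf_eval (Comp f gs) xs z"
| pr0: "rf_eval f xs z \<Longrightarrow> rf_eval (PrimRec f g) (0 # xs) z"
| prS: "rf_eval (PrimRec f g) (n # xs) y \<Longrightarrow> rf_eval g (n # y # xs) z
          \<Longrightarrow> rf_eval (PrimRec f g) (Suc n # xs) z"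
| mn: "rf_eval f (n # xs) 0 \<Longrightarrow> (\<forall>m < n. \<exists>y. 0 < y \<and> rf_eval f (m # xs) y)
          \<Longrightarrow> rf_eval (Minim f) xs n"

end

theory Submission
  imports Defs Complex_Main "HOL-Library.Function_Algebras" "HOL-Library.Infinite_Set"
begin

text \<open>For a value v with representation of length L, pumping the block of a pair (n, v) where
  only n has digits shows that the fiber of v is infinite iff it has an element whose length lies in
  (L + E, L + 2E], E = 2N + 4, and otherwise all its elements have length at most L + E; so finiteness
  and size of each fiber are found by bounded search. To bound the v that must be examined, count
  the words n in these windows by the state they lead to: along the representation of v these counts
  evolve by linear maps, and once they are indexed also by their support, a disagreement between the
  fibers of the two sequences is the nonvanishing of a linear functional. Such a functional, if
  nonzero on the orbit at all, is nonzero on a word of length at most the dimension.\<close>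

section \<open>Primitive recursive functions\<close>

text \<open>Terms without minimisation are evaluated directly; \<open>Minim\<close> gets the junk value 0,
  which \<open>prim_of_arity\<close> rules out.\<close>
primrec prim_val :: "recf \<Rightarrow> nat list \<Rightarrow> nat" where
  "prim_val Zero xs = 0"
| "prim_val Succ xs = Suc (hd xs)"
| "prim_val (Proj i) xs = xs ! i"
| "prim_val (Comp f gs) xs = prim_val f (map (\<lambda>g. prim_val g xs) gs)"
| "prim_val (PrimRec f g) xs = (case xs of [] \<Rightarrow> 0 | n # ys \<Rightarrow> rec_nat (prim_val f ys) (\<lambda>m y. prim_val g (m # y # ys)) n)"
| "prim_val (Minim f) xs = 0"

primrec prim_of_arity :: "recf \<Rightarrow> nat \<Rightarrow> bool" where
  "prim_of_arity Zero k = True"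
| "prim_of_arity Succ k = (1 \<le> k)"
| "prim_of_arity (Proj i) k = (i < k)"
| "prim_of_arity (Comp f gs) k = (prim_of_arity f (length gs) \<and> list_all (\<lambda>g. prim_of_arity g k) gs)"
| "prim_of_arity (PrimRec f g) k = (1 \<le> k \<and> prim_of_arity f (k - 1) \<and> prim_of_arity g (k + 1))"
| "prim_of_arity (Minim f) k = False"

lemma rf_eval_prim_val: "prim_of_arity r (length xs) \<Longrightarrow> rf_eval r xs (prim_val r xs)"
proof (induction r arbitrary: xs)
  case Zero then show ?case by (simp add: rf_eval.zero)
next
  case Succ then show ?case by (cases xs) (auto intro: rf_eval.succ)
next
  case (Proj i) then show ?case using rf_eval.proj[of i xs] by simp
next
  case (Comp f gs)
  show ?case
  proof (rule rf_eval.comp[of "map (\<lambda>g. prim_val g xs) gs"])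
    show "length (map (\<lambda>g. prim_val g xs) gs) = length gs" by simp
    show "\<forall>i<length gs. rf_eval (gs ! i) xs (map (\<lambda>g. prim_val g xs) gs ! i)"
      using Comp by (auto simp: nth_mem list_all_iff)
    show "rf_eval f (map (\<lambda>g. prim_val g xs) gs) (prim_val (Comp f gs) xs)"
      using Comp by simp
  qed
next
  case (PrimRec f g)
  then obtain n ys where xs: "xs = n # ys" by (cases xs) auto
  have "rf_eval (PrimRec f g) (n # ys) (rec_nat (prim_val f ys) (\<lambda>m y. prim_val g (m # y # ys)) n)"
  proof (induction n)
    case 0 then show ?case using PrimRec xs by (auto intro: rf_eval.pr0)
  next
    case (Suc n) then show ?case using PrimRec xs by (auto intro: rf_eval.prS)
  qed
  then show ?case using xs by simp
next
  case (Minim f) then show ?case by simp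
qed

fun r_const :: "nat \<Rightarrow> recf" where
  "r_const 0 = Zero" | "r_const (Suc k) = Comp Succ [r_const k]"

lemma r_const_val[simp]: "prim_val (r_const k) xs = k" by (induction k) auto
lemma r_const_arity[simp]: "prim_of_arity (r_const k) n" by (induction k) auto

definition r_add :: recf where
  "r_add = PrimRec (Proj 0) (Comp Succ [Proj 1])"
lemma r_add_arity[simp]: "prim_of_arity r_add (Suc (Suc 0))" by (simp add: r_add_def)
lemma r_add_val[simp]: "prim_val r_add [x, y] = x + y"
  by (induction x) (simp_all add: r_add_def)

definition r_mult :: recf where
  "r_mult = PrimRec Zero (Comp r_add [Proj 1, Proj 2])"
lemma r_mult_arity[simp]: "prim_of_arity r_mult (Suc (Suc 0))" by (simp add: r_mult_def)
lemma r_mult_val[simp]: "prim_val r_mult [x, y] = x * y"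
  by (induction x) (simp_all add: r_mult_def)

definition r_pred :: recf where
  "r_pred = PrimRec Zero (Proj 0)"
lemma r_pred_arity[simp]: "prim_of_arity r_pred (Suc 0)" by (simp add: r_pred_def)
lemma r_pred_val[simp]: "prim_val r_pred [x] = x - 1"
  by (cases x) (simp_all add: r_pred_def)

definition r_sub_rev :: recf where
  "r_sub_rev = PrimRec (Proj 0) (Comp r_pred [Proj 1])"
lemma r_sub_rev_arity[simp]: "prim_of_arity r_sub_rev (Suc (Suc 0))" by (simp add: r_sub_rev_def)
lemma r_sub_rev_val[simp]: "prim_val r_sub_rev [y, x] = x - y"
  by (induction y) (simp_all add: r_sub_rev_def)

definition r_sub :: recf where
  "r_sub = Comp r_sub_rev [Proj 1, Proj 0]"
lemma r_sub_arity[simp]: "prim_of_arity r_sub (Suc (Suc 0))" by (simp add: r_sub_def)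
lemma r_sub_val[simp]: "prim_val r_sub [x, y] = x - y"
  by (simp add: r_sub_def)

definition r_cond :: recf where
  "r_cond = PrimRec (Proj 1) (Proj 2)"
lemma r_cond_arity[simp]: "prim_of_arity r_cond (Suc (Suc (Suc 0)))" by (simp add: r_cond_def)
lemma r_cond_val[simp]: "prim_val r_cond [c, x, y] = (if c = 0 then y else x)"
  by (cases c) (simp_all add: r_cond_def)

definition r_is_zero :: recf where
  "r_is_zero = PrimRec (r_const 1) Zero"
lemma r_is_zero_arity[simp]: "prim_of_arity r_is_zero (Suc 0)" by (simp add: r_is_zero_def)
lemma r_is_zero_val[simp]: "prim_val r_is_zero [c] = (if c = 0 then 1 else 0)"
  by (cases c) (simp_all add: r_is_zero_def)

definition r_le :: recf where
  "r_le = Comp r_is_zero [r_sub]"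
lemma r_le_arity[simp]: "prim_of_arity r_le (Suc (Suc 0))" by (simp add: r_le_def)
lemma r_le_val[simp]: "prim_val r_le [x, y] = (if x \<le> y then 1 else 0)"
  by (simp add: r_le_def)

definition r_eq :: recf where
  "r_eq = Comp r_mult [r_le, Comp r_le [Proj 1, Proj 0]]"
lemma r_eq_arity[simp]: "prim_of_arity r_eq (Suc (Suc 0))" by (simp add: r_eq_def)
lemma r_eq_val[simp]: "prim_val r_eq [x, y] = (if x = y then 1 else 0)"
  by (simp add: r_eq_def)

definition r_max :: recf where
  "r_max = Comp r_cond [r_le, Proj 1, Proj 0]"
lemma r_max_arity[simp]: "prim_of_arity r_max (Suc (Suc 0))" by (simp add: r_max_def)
lemma r_max_val[simp]: "prim_val r_max [x, y] = max x y"
  by (simp add: r_max_def)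

definition r_sum_below :: "nat \<Rightarrow> recf \<Rightarrow> recf" where
  "r_sum_below k g = PrimRec Zero (Comp r_add [Proj 1, Comp g (Proj 0 # map (\<lambda>j. Proj (j+2)) [0..<k])])"

lemma r_sum_below_arity[simp]: "prim_of_arity g (Suc k) \<Longrightarrow> prim_of_arity (r_sum_below k g) (Suc k)"
  by (simp add: r_sum_below_def list_all_iff)

lemma map_proj_shift: "length xs = k \<Longrightarrow> map ((\<lambda>g. prim_val g (a # b # xs)) \<circ> (\<lambda>j. Proj (Suc (Suc j)))) [0..<k] = xs"
  by (rule nth_equalityI) auto

lemma r_sum_below_val[simp]: "length xs = k \<Longrightarrow> prim_val (r_sum_below k g) (n # xs) = (\<Sum>i<n. prim_val g (i # xs))"
  by (induction n) (simp_all add: r_sum_below_def map_proj_shift[of xs k])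

definition r_pow2 :: recf where
  "r_pow2 = PrimRec (r_const 1) (Comp r_add [Proj 1, Proj 1])"
lemma r_pow2_arity[simp]: "prim_of_arity r_pow2 (Suc 0)" by (simp add: r_pow2_def)
lemma r_pow2_val[simp]: "prim_val r_pow2 [n] = 2 ^ n"
  by (induction n) (simp_all add: r_pow2_def)

definition r_tri :: recf where
  "r_tri = PrimRec Zero (Comp r_add [Proj 1, Comp Succ [Proj 0]])"
lemma r_tri_arity[simp]: "prim_of_arity r_tri (Suc 0)" by (simp add: r_tri_def)
lemma r_tri_val[simp]: "prim_val r_tri [n] = triangle n"
  by (induction n) (simp_all add: r_tri_def)

definition r_prod_encode :: recf where
  "r_prod_encode = Comp r_add [Comp r_tri [r_add], Proj 0]"
lemma r_prod_encode_arity[simp]: "prim_of_arity r_prod_encode (Suc (Suc 0))" by (simp add: r_prod_encode_def)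
lemma r_prod_encode_val[simp]: "prim_val r_prod_encode [x, y] = prod_encode (x, y)"
  by (simp add: r_prod_encode_def prod_encode_def)

definition tri_root :: "nat \<Rightarrow> nat" where "tri_root m = (\<Sum>j<m. if triangle (Suc j) \<le> m then 1 else 0)"
definition pair_fst :: "nat \<Rightarrow> nat" where "pair_fst m = m - triangle (tri_root m)"
definition pair_snd :: "nat \<Rightarrow> nat" where "pair_snd m = tri_root m - pair_fst m"

definition r_tri_root :: recf where
  "r_tri_root = Comp (r_sum_below 1 (Comp r_le [Comp r_tri [Comp Succ [Proj 0]], Proj 1])) [Proj 0, Proj 0]"
lemma r_tri_root_arity[simp]: "prim_of_arity r_tri_root (Suc 0)" by (simp add: r_tri_root_def)
lemma r_tri_root_val[simp]: "prim_val r_tri_root [m] = tri_root m"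
  by (simp add: r_tri_root_def tri_root_def)

definition r_pair_fst :: recf where
  "r_pair_fst = Comp r_sub [Proj 0, Comp r_tri [r_tri_root]]"
lemma r_pair_fst_arity[simp]: "prim_of_arity r_pair_fst (Suc 0)" by (simp add: r_pair_fst_def)
lemma r_pair_fst_val[simp]: "prim_val r_pair_fst [m] = pair_fst m"
  by (simp add: r_pair_fst_def pair_fst_def)

definition r_pair_snd :: recf where
  "r_pair_snd = Comp r_sub [r_tri_root, r_pair_fst]"
lemma r_pair_snd_arity[simp]: "prim_of_arity r_pair_snd (Suc 0)" by (simp add: r_pair_snd_def)
lemma r_pair_snd_val[simp]: "prim_val r_pair_snd [m] = pair_snd m"
  by (simp add: r_pair_snd_def pair_snd_def)

lemma le_triangle: "n \<le> triangle n" by (induction n) auto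

lemma triangle_mono: "a \<le> b \<Longrightarrow> triangle a \<le> triangle b"
  by (induction b) (auto simp: le_Suc_eq)

lemma prod_decode_eq_pair: "prod_decode m = (pair_fst m, pair_snd m)"
proof -
  obtain x y where xy: "prod_decode m = (x, y)" by (cases "prod_decode m")
  have m: "m = triangle (x + y) + x"
    using prod_decode_inverse[of m] xy by (simp add: prod_encode_def)
  have le: "x + y \<le> m" using le_triangle[of "x+y"] m by simp
  have P: "\<forall>j<m. (triangle (Suc j) \<le> m) = (j < x + y)"
  proof (intro allI impI)
    fix j assume "j < m"
    show "(triangle (Suc j) \<le> m) = (j < x + y)"
    proof
      assume a: "triangle (Suc j) \<le> m"
      show "j < x + y"
      proof (rule ccontr)
        assume "\<not> j < x + y"
        then have "triangle (Suc (x+y)) \<le> triangle (Suc j)" by (intro triangle_mono) simp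
        then show False using a m by simp
      qed
    next
      assume "j < x + y"
      then have "triangle (Suc j) \<le> triangle (x+y)" by (intro triangle_mono) simp
      then show "triangle (Suc j) \<le> m" using m by simp
    qed
  qed
  have "tri_root m = (\<Sum>j<m. if j < x + y then 1 else 0)"
    unfolding tri_root_def by (rule sum.cong) (use P in auto)
  also have "\<dots> = card ({..<m} \<inter> {j. j < x + y})"
    by (simp add: sum.If_cases)
  also have "{..<m} \<inter> {j. j < x + y} = {..<x+y}" using le by auto
  finally have "tri_root m = x + y" by simp
  then show ?thesis using xy m by (simp add: pair_fst_def pair_snd_def)
qed

lemma pair_fst_prod_encode[simp]: "pair_fst (prod_encode (x, y)) = x"
  and pair_snd_prod_encode[simp]: "pair_snd (prod_encode (x, y)) = y"
  using prod_decode_eq_pair[of "prod_encode (x, y)"] by simp_all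

definition code_hd :: "nat \<Rightarrow> nat" where "code_hd c = pair_fst (c - 1)"
definition code_tl :: "nat \<Rightarrow> nat" where "code_tl c = pair_snd (c - 1)"

lemma code_hd_list_encode[simp]: "code_hd (list_encode (x # xs)) = x"
  by (simp add: code_hd_def)
lemma code_tl_list_encode[simp]: "code_tl (list_encode (x # xs)) = list_encode xs"
  by (simp add: code_tl_def)

definition code_nth :: "nat \<Rightarrow> nat \<Rightarrow> nat" where "code_nth c i = code_hd ((code_tl ^^ i) c)"

lemma code_tl_funpow_list_encode: "i \<le> length L \<Longrightarrow> (code_tl ^^ i) (list_encode L) = list_encode (drop i L)"
proof (induction i arbitrary: L)
  case 0 then show ?case by simp
next
  case (Suc i)
  then obtain x xs where L: "L = x # xs" by (cases L) auto
  have "(code_tl ^^ Suc i) (list_encode L) = (code_tl ^^ i) (code_tl (list_encode L))"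
    by (simp add: funpow_Suc_right del: funpow.simps)
  also have "\<dots> = (code_tl ^^ i) (list_encode xs)" using L by (simp del: list_encode.simps)
  also have "\<dots> = list_encode (drop i xs)" using Suc L by simp
  finally show ?case using L by simp
qed

lemma code_nth_list_encode: "i < length L \<Longrightarrow> code_nth (list_encode L) i = L ! i"
  unfolding code_nth_def using code_tl_funpow_list_encode[of i L]
  by (simp add: Cons_nth_drop_Suc[symmetric] del: list_encode.simps)

definition r_code_hd :: recf where
  "r_code_hd = Comp r_pair_fst [Comp r_pred [Proj 0]]"
lemma r_code_hd_arity[simp]: "prim_of_arity r_code_hd (Suc 0)" by (simp add: r_code_hd_def)
lemma r_code_hd_val[simp]: "prim_val r_code_hd [c] = code_hd c" by (simp add: r_code_hd_def code_hd_def)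

definition r_code_tl :: recf where
  "r_code_tl = Comp r_pair_snd [Comp r_pred [Proj 0]]"
lemma r_code_tl_arity[simp]: "prim_of_arity r_code_tl (Suc 0)" by (simp add: r_code_tl_def)
lemma r_code_tl_val[simp]: "prim_val r_code_tl [c] = code_tl c" by (simp add: r_code_tl_def code_tl_def)

definition r_code_tl_funpow :: recf where
  "r_code_tl_funpow = PrimRec (Proj 0) (Comp r_code_tl [Proj 1])"
lemma r_code_tl_funpow_arity[simp]: "prim_of_arity r_code_tl_funpow (Suc (Suc 0))" by (simp add: r_code_tl_funpow_def)
lemma r_code_tl_funpow_val[simp]: "prim_val r_code_tl_funpow [i, c] = (code_tl ^^ i) c"
  by (induction i) (simp_all add: r_code_tl_funpow_def)

definition r_code_nth :: recf where
  "r_code_nth = Comp r_code_hd [Comp r_code_tl_funpow [Proj 1, Proj 0]]"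
lemma r_code_nth_arity[simp]: "prim_of_arity r_code_nth (Suc (Suc 0))" by (simp add: r_code_nth_def)
lemma r_code_nth_val[simp]: "prim_val r_code_nth [c, i] = code_nth c i" by (simp add: r_code_nth_def code_nth_def)

definition r_fib_pair :: recf where
  "r_fib_pair = PrimRec (r_const (prod_encode (0, 1)))
   (Comp r_prod_encode [Comp r_pair_snd [Proj 1], Comp r_add [Comp r_pair_fst [Proj 1], Comp r_pair_snd [Proj 1]]])"
lemma r_fib_pair_arity[simp]: "prim_of_arity r_fib_pair (Suc 0)" by (simp add: r_fib_pair_def)
lemma r_fib_pair_val: "prim_val r_fib_pair [n] = prod_encode (fib n, fib (Suc n))"
  by (induction n) (simp_all add: r_fib_pair_def)

definition r_fib :: recf where
  "r_fib = Comp r_pair_fst [r_fib_pair]"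
lemma r_fib_arity[simp]: "prim_of_arity r_fib (Suc 0)" by (simp add: r_fib_def)
lemma r_fib_val[simp]: "prim_val r_fib [n] = fib n"
  by (simp add: r_fib_def r_fib_pair_val)

section \<open>Zeckendorf representations\<close>

lemma zeck_val_Nil[simp]: "zeck_val [] = 0" by (simp add: zeck_val_def)

lemma zeck_val_Cons[simp]: "zeck_val (b # w) = (if b then fib (length w + 2) else 0) + zeck_val w"
proof -
  have e: "(\<Sum>i<length w. if w ! i then fib (Suc (length w) - Suc i + 1) else 0) =
     (\<Sum>i<length w. if w ! i then fib (length w - i + 1) else 0)"
    by (rule sum.cong) (simp_all only: diff_Suc_Suc)
  show ?thesis
    unfolding zeck_val_def length_Cons sum.lessThan_Suc_shift nth_Cons_Suc nth_Cons_0 e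
    by simp
qed

lemma zeck_val_replicate[simp]: "zeck_val (replicate k False @ w) = zeck_val w"
  by (induction k) auto

lemma no_adj_ones_Nil[simp]: "no_adj_ones []" by (simp add: no_adj_ones_def)

lemma no_adj_ones_Cons: "no_adj_ones (b # w) \<longleftrightarrow> (b \<longrightarrow> w = [] \<or> \<not> hd w) \<and> no_adj_ones w"
proof
  assume H: "no_adj_ones (b # w)"
  have h: "\<And>i. Suc i < Suc (length w) \<Longrightarrow> \<not> ((b # w) ! i \<and> (b # w) ! Suc i)"
    using H unfolding no_adj_ones_def by simp
  have "b \<longrightarrow> w = [] \<or> \<not> hd w"
  proof (cases w)
    case (Cons c w') then show ?thesis using h[of 0] by simp
  qed simp
  moreover have "no_adj_ones w" unfolding no_adj_ones_def
  proof (intro allI impI)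
    fix i assume "Suc i < length w"
    then show "\<not> (w ! i \<and> w ! Suc i)" using h[of "Suc i"] by simp
  qed
  ultimately show "(b \<longrightarrow> w = [] \<or> \<not> hd w) \<and> no_adj_ones w" by blast
next
  assume H: "(b \<longrightarrow> w = [] \<or> \<not> hd w) \<and> no_adj_ones w"
  show "no_adj_ones (b # w)" unfolding no_adj_ones_def
  proof (intro allI impI)
    fix i assume i: "Suc i < length (b # w)"
    show "\<not> ((b # w) ! i \<and> (b # w) ! Suc i)"
    proof (cases i)
      case 0 then show ?thesis using H i by (cases w) auto
    next
      case (Suc j) then show ?thesis using H i unfolding no_adj_ones_def by simp
    qed
  qed
qed

lemma no_adj_ones_Cons_simps[simp]:
  "no_adj_ones [b]"
  "no_adj_ones (False # w) \<longleftrightarrow> no_adj_ones w"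
  "no_adj_ones (True # c # w) \<longleftrightarrow> \<not> c \<and> no_adj_ones (c # w)"
  by (auto simp: no_adj_ones_Cons)

lemma no_adj_ones_append: "no_adj_ones (u @ v) \<longleftrightarrow>
   no_adj_ones u \<and> no_adj_ones v \<and> \<not> (u \<noteq> [] \<and> v \<noteq> [] \<and> last u \<and> hd v)"
  by (induction u) (auto simp: no_adj_ones_Cons)

lemma no_adj_ones_replicate[simp]: "no_adj_ones (replicate k False @ w) \<longleftrightarrow> no_adj_ones w"
  by (induction k) auto

lemma zeck_val_less_fib: "no_adj_ones w \<Longrightarrow> zeck_val w < fib (length w + 2)"
proof (induction w rule: length_induct)
  case (1 w)
  show ?case
  proof (cases w)
    case Nil then show ?thesis by simp
  next
    case (Cons b w')
    show ?thesis
    proof (cases b)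
      case False
      then have "zeck_val w' < fib (length w' + 2)" using 1 Cons by (auto simp: no_adj_ones_Cons)
      moreover have "fib (length w' + 2) \<le> fib (length w + 2)" using Cons by (intro fib_mono) simp
      ultimately show ?thesis using Cons False by simp
    next
      case True
      show ?thesis
      proof (cases w')
        case Nil then show ?thesis using Cons True by (simp add: numeral_2_eq_2)
      next
        case (Cons c w'')
        with \<open>w = b # w'\<close> True 1 have c: "\<not> c" and na: "no_adj_ones w''"
          by (auto simp: no_adj_ones_Cons)
        have "zeck_val w'' < fib (length w'' + 2)" using 1 na \<open>w = b # w'\<close> Cons by auto
        then show ?thesis using \<open>w = b # w'\<close> True Cons c
          by (simp add: numeral_2_eq_2)
      qed
    qed
  qed
qed

lemma fib_le_zeck_val: "w \<noteq> [] \<Longrightarrow> hd w \<Longrightarrow> fib (length w + 1) \<le> zeck_val w"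
  by (cases w) auto

lemma zeck_val_inj_same_length:
  "no_adj_ones u \<Longrightarrow> no_adj_ones v \<Longrightarrow> length u = length v \<Longrightarrow> zeck_val u = zeck_val v \<Longrightarrow> u = v"
proof (induction u arbitrary: v)
  case Nil then show ?case by simp
next
  case (Cons a u)
  then obtain b v' where v: "v = b # v'" by (cases v) auto
  have nu: "no_adj_ones u" and nv: "no_adj_ones v'" using Cons v by (auto simp: no_adj_ones_Cons)
  have bu: "zeck_val u < fib (length u + 2)" using zeck_val_less_fib[OF nu] .
  have bv: "zeck_val v' < fib (length u + 2)" using zeck_val_less_fib[OF nv] Cons v by simp
  have "a = b"
  proof (rule ccontr)
    assume "a \<noteq> b"
    then show False using Cons.prems v bu bv by (cases a; cases b) auto
  qed
  then have "zeck_val u = zeck_val v'" using Cons.prems v by (auto split: if_splits)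
  then have "u = v'" using Cons.IH[OF nu nv] Cons.prems v by simp
  then show ?case using v \<open>a = b\<close> by simp
qed

lemma zeck_val_surj_length: "n < fib (L + 2) \<Longrightarrow> \<exists>w. no_adj_ones w \<and> length w = L \<and> zeck_val w = n"
proof (induction L arbitrary: n rule: less_induct)
  case (less L)
  show ?case
  proof (cases L)
    case 0 then show ?thesis using less.prems by (intro exI[of _ "[]"]) (simp add: numeral_2_eq_2)
  next
    case (Suc L')
    show ?thesis
    proof (cases "n < fib (L' + 2)")
      case True
      then obtain w where "no_adj_ones w" "length w = L'" "zeck_val w = n" using less Suc by blast
      then show ?thesis using Suc by (intro exI[of _ "False # w"]) simp
    next
      case False
      show ?thesis
      proof (cases L')
        case 0
        then have "n = 1" using False less.prems Suc by (simp add: numeral_2_eq_2 numeral_3_eq_3)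
        then show ?thesis using Suc 0 by (intro exI[of _ "[True]"]) (simp add: numeral_2_eq_2)
      next
        case (Suc L'')
        have "n < fib (L + 2)" by fact
        then have "n - fib (L' + 2) < fib (L'' + 2)" using False Suc \<open>L = Suc L'\<close>
          by (simp add: numeral_2_eq_2)
        then obtain w where w: "no_adj_ones w" "length w = L''" "zeck_val w = n - fib (L' + 2)"
          using less.IH[of L'' "n - fib (L' + 2)"] Suc \<open>L = Suc L'\<close> by auto
        show ?thesis using w Suc \<open>L = Suc L'\<close> False
          by (intro exI[of _ "True # False # w"]) (simp add: numeral_2_eq_2)
      qed
    qed
  qed
qed

definition canonical :: "bool list \<Rightarrow> bool" where
  "canonical w \<longleftrightarrow> no_adj_ones w \<and> (w = [] \<or> hd w)"

lemma canonical_zeck_val_inj: "canonical u \<Longrightarrow> canonical v \<Longrightarrow> zeck_val u = zeck_val v \<Longrightarrow> u = v"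
proof -
  assume cu: "canonical u" and cv: "canonical v" and e: "zeck_val u = zeck_val v"
  have len: "length u = length v"
  proof (rule ccontr)
    assume "length u \<noteq> length v"
    then consider "length u < length v" | "length v < length u" by linarith
    then show False
    proof cases
      case 1
      then have "v \<noteq> []" by auto
      then have "fib (length v + 1) \<le> zeck_val v" using cv fib_le_zeck_val canonical_def by auto
      moreover have "zeck_val u < fib (length u + 2)" using cu zeck_val_less_fib canonical_def by auto
      moreover have "fib (length u + 2) \<le> fib (length v + 1)" using 1 by (intro fib_mono) simp
      ultimately show False using e by simp
    next
      case 2
      then have "u \<noteq> []" by auto
      then have "fib (length u + 1) \<le> zeck_val u" using cu fib_le_zeck_val canonical_def by auto
      moreover have "zeck_val v < fib (length v + 2)" using cv zeck_val_less_fib canonical_def by auto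
      moreover have "fib (length v + 2) \<le> fib (length u + 1)" using 2 by (intro fib_mono) simp
      ultimately show False using e by simp
    qed
  qed
  show "u = v" using zeck_val_inj_same_length[OF _ _ len e] cu cv by (simp add: canonical_def)
qed

lemma canonical_dropWhile_Not: "no_adj_ones w \<Longrightarrow> canonical (dropWhile Not w)"
proof (induction w)
  case Nil then show ?case by (simp add: canonical_def)
next
  case (Cons a w) then show ?case by (cases a) (auto simp: canonical_def no_adj_ones_Cons)
qed

lemma replicate_dropWhile_Not: "w = replicate (length w - length (dropWhile Not w)) False @ dropWhile Not w"
proof (induction w)
  case Nil then show ?case by simp
next
  case (Cons a w)
  show ?case
  proof (cases a)
    case True then show ?thesis by simp
  next
    case False
    have "length (dropWhile Not w) \<le> length w" by (simp add: length_dropWhile_le)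
    then have "length (a # w) - length (dropWhile Not (a # w)) = Suc (length w - length (dropWhile Not w))"
      using False by simp
    then show ?thesis using False Cons by simp
  qed
qed

lemma zeck_val_dropWhile_Not: "zeck_val (dropWhile Not w) = zeck_val w"
  using zeck_val_replicate replicate_dropWhile_Not by metis

lemma le_fib_add2: "k + 1 \<le> fib (k + 2)"
proof (induction k)
  case 0 then show ?case by simp
next
  case (Suc k)
  have "fib (Suc k + 2) = fib (k + 2) + fib (k + 1)" by (simp add: numeral_2_eq_2)
  moreover have "0 < fib (k + 1)" by (simp add: fib_neq_0_nat)
  ultimately show ?case using Suc by simp
qed

lemma canonical_exists: "\<exists>w. canonical w \<and> zeck_val w = n"
proof -
  have "n < fib (n + 2)" using le_fib_add2[of n] by simp
  then obtain w where "no_adj_ones w" "zeck_val w = n" using zeck_val_surj_length by blast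
  then show ?thesis using canonical_dropWhile_Not zeck_val_dropWhile_Not by metis
qed

lemma fib_rep_spec: "canonical (fib_rep n) \<and> zeck_val (fib_rep n) = n"
proof -
  obtain w where w: "canonical w" "zeck_val w = n" using canonical_exists by blast
  have "no_adj_ones (fib_rep n) \<and> (fib_rep n = [] \<or> hd (fib_rep n)) \<and> zeck_val (fib_rep n) = n"
    unfolding fib_rep_def
    by (rule theI[of _ w]) (use w canonical_zeck_val_inj in \<open>auto simp: canonical_def\<close>)
  then show ?thesis by (simp add: canonical_def)
qed

lemma canonical_fib_rep: "canonical (fib_rep n)" and zeck_fib_rep[simp]: "zeck_val (fib_rep n) = n"
  using fib_rep_spec by auto

lemma fib_rep_zeck_val: "canonical w \<Longrightarrow> fib_rep (zeck_val w) = w"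
  using canonical_zeck_val_inj fib_rep_spec by blast

lemma no_adj_ones_fib_rep: "no_adj_ones (fib_rep n)"
  using canonical_fib_rep canonical_def by auto

lemma length_fib_rep_le_iff: "length (fib_rep n) \<le> L \<longleftrightarrow> n < fib (L + 2)"
proof
  assume "length (fib_rep n) \<le> L"
  then have "fib (length (fib_rep n) + 2) \<le> fib (L + 2)" by (intro fib_mono) simp
  then show "n < fib (L + 2)" using zeck_val_less_fib[OF no_adj_ones_fib_rep, of n] by simp
next
  assume a: "n < fib (L + 2)"
  show "length (fib_rep n) \<le> L"
  proof (rule ccontr)
    assume "\<not> length (fib_rep n) \<le> L"
    then have ne: "fib_rep n \<noteq> []" and le: "L + 2 \<le> length (fib_rep n) + 1" by auto
    have "fib (L+2) \<le> fib (length (fib_rep n) + 1)" using le by (rule fib_mono)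
    moreover have "fib (length (fib_rep n) + 1) \<le> n"
      using fib_le_zeck_val[of "fib_rep n"] canonical_fib_rep[of n] ne by (auto simp: canonical_def)
    ultimately show False using a by simp
  qed
qed

definition padded_rep :: "nat \<Rightarrow> nat \<Rightarrow> bool list" where
  "padded_rep n L = replicate (L - length (fib_rep n)) False @ fib_rep n"

lemma padded_rep_props: "length (fib_rep n) \<le> L \<Longrightarrow> no_adj_ones (padded_rep n L) \<and> length (padded_rep n L) = L \<and> zeck_val (padded_rep n L) = n"
  by (simp add: padded_rep_def no_adj_ones_fib_rep)

lemma eq_padded_rep_zeck_val: "no_adj_ones w \<Longrightarrow> w = padded_rep (zeck_val w) (length w)"
proof -
  assume w: "no_adj_ones w"
  have "fib_rep (zeck_val w) = dropWhile Not w"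
    using fib_rep_zeck_val[OF canonical_dropWhile_Not[OF w]] zeck_val_dropWhile_Not by metis
  then show ?thesis unfolding padded_rep_def using replicate_dropWhile_Not by metis
qed

section \<open>Reading digits and running coded automata\<close>

definition rep_length :: "nat \<Rightarrow> nat" where "rep_length x = (\<Sum>L<x. if fib (L + 2) \<le> x then 1 else 0)"

lemma length_fib_rep_le: "length (fib_rep x) \<le> x"
  using length_fib_rep_le_iff[of x x] le_fib_add2[of x] by simp

lemma rep_length_eq: "rep_length x = length (fib_rep x)"
proof -
  have "rep_length x = (\<Sum>L<x. if L < length (fib_rep x) then 1 else 0)"
    unfolding rep_length_def
    by (rule sum.cong) (use length_fib_rep_le_iff[of x] in \<open>auto simp: not_le[symmetric]\<close>)
  also have "\<dots> = card ({..<x} \<inter> {L. L < length (fib_rep x)})" by (simp add: sum.If_cases)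
  also have "{..<x} \<inter> {L. L < length (fib_rep x)} = {..<length (fib_rep x)}"
    using length_fib_rep_le[of x] by auto
  finally show ?thesis by simp
qed

definition r_rep_length :: recf where
  "r_rep_length = Comp (r_sum_below 1 (Comp r_le [Comp r_fib [Comp Succ [Comp Succ [Proj 0]]], Proj 1])) [Proj 0, Proj 0]"
lemma r_rep_length_arity[simp]: "prim_of_arity r_rep_length (Suc 0)" by (simp add: r_rep_length_def)
lemma r_rep_length_val[simp]: "prim_val r_rep_length [x] = rep_length x" by (simp add: r_rep_length_def rep_length_def)

text \<open>Digits of the length-m padded representation of x are read greedily: \<open>zeck_rest x m j\<close>
  is the value of the digits from position j on, and digit j is 1 iff \<open>fib (m - j + 1)\<close> fits into it.\<close>
primrec zeck_rest :: "nat \<Rightarrow> nat \<Rightarrow> nat \<Rightarrow> nat" where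
  "zeck_rest x m 0 = x"
| "zeck_rest x m (Suc j) = zeck_rest x m j - (if fib (Suc (m - j)) \<le> zeck_rest x m j then fib (Suc (m - j)) else 0)"

definition r_zeck_rest :: recf where
  "r_zeck_rest = PrimRec (Proj 0) (Comp r_sub [Proj 1,
   Comp r_cond [Comp r_le [Comp r_fib [Comp Succ [Comp r_sub [Proj 3, Proj 0]]], Proj 1],
                Comp r_fib [Comp Succ [Comp r_sub [Proj 3, Proj 0]]], Zero]])"
lemma r_zeck_rest_arity[simp]: "prim_of_arity r_zeck_rest (Suc (Suc (Suc 0)))" by (simp add: r_zeck_rest_def)
lemma r_zeck_rest_val[simp]: "prim_val r_zeck_rest [j, x, m] = zeck_rest x m j"
  by (induction j) (simp_all add: r_zeck_rest_def)

definition zeck_digit :: "nat \<Rightarrow> nat \<Rightarrow> nat \<Rightarrow> nat" where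
  "zeck_digit x m j = (if fib (Suc (m - j)) \<le> zeck_rest x m j then 1 else 0)"

definition r_zeck_digit :: recf where
  "r_zeck_digit = Comp r_le [Comp r_fib [Comp Succ [Comp r_sub [Proj 1, Proj 2]]], Comp r_zeck_rest [Proj 2, Proj 0, Proj 1]]"
lemma r_zeck_digit_arity[simp]: "prim_of_arity r_zeck_digit (Suc (Suc (Suc 0)))" by (simp add: r_zeck_digit_def)
lemma r_zeck_digit_val[simp]: "prim_val r_zeck_digit [x, m, j] = zeck_digit x m j" by (simp add: r_zeck_digit_def zeck_digit_def)

lemma no_adj_ones_drop: "no_adj_ones w \<Longrightarrow> no_adj_ones (drop j w)"
  using no_adj_ones_append[of "take j w" "drop j w"] by simp

lemma zeck_rest_correct:
  assumes w: "no_adj_ones w" "length w = m" "zeck_val w = x"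
  shows "j \<le> m \<Longrightarrow> zeck_rest x m j = zeck_val (drop j w)"
    and "j < m \<Longrightarrow> (w ! j) = (fib (Suc (m - j)) \<le> zeck_rest x m j)"
proof -
  have key: "j < m \<Longrightarrow> zeck_val (drop j w) = (if w ! j then fib (Suc (m - j)) else 0) + zeck_val (drop (Suc j) w)
       \<and> zeck_val (drop (Suc j) w) < fib (Suc (m - j))" for j
  proof -
    assume j: "j < m"
    have d: "drop j w = w ! j # drop (Suc j) w" using j w by (simp add: Cons_nth_drop_Suc)
    have l: "length (drop (Suc j) w) + 2 = Suc (m - j)" using j w by simp
    have "zeck_val (drop (Suc j) w) < fib (length (drop (Suc j) w) + 2)"
      by (rule zeck_val_less_fib[OF no_adj_ones_drop[OF w(1)]])
    then show ?thesis using l by (subst d) (simp only: zeck_val_Cons l)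
  qed
  have A: "j \<le> m \<Longrightarrow> zeck_rest x m j = zeck_val (drop j w)" for j
  proof (induction j)
    case 0 then show ?case using w by simp
  next
    case (Suc j)
    then have j: "j < m" by simp
    show ?case using Suc key[OF j] j by (auto split: if_splits)
  qed
  show "j \<le> m \<Longrightarrow> zeck_rest x m j = zeck_val (drop j w)" by (rule A)
  show "j < m \<Longrightarrow> (w ! j) = (fib (Suc (m - j)) \<le> zeck_rest x m j)"
  proof -
    assume j: "j < m"
    show ?thesis using key[OF j] A[of j] j by auto
  qed
qed

lemma padded_rep_nth:
  assumes "length (fib_rep x) \<le> m" "j < m"
  shows "padded_rep x m ! j = (zeck_digit x m j = 1)"
  using zeck_rest_correct(2)[of "padded_rep x m" m x j] padded_rep_props[OF assms(1)] assms(2)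
  by (simp add: zeck_digit_def)

lemma pad_pair_padded_rep: "pad_pair (fib_rep n) (fib_rep v) =
   zip (padded_rep n (max (length (fib_rep n)) (length (fib_rep v)))) (padded_rep v (max (length (fib_rep n)) (length (fib_rep v))))"
  by (simp add: pad_pair_def padded_rep_def Let_def)

definition dfa_code_list :: "dfa \<Rightarrow> nat list" where
  "dfa_code_list A = [nstates A, init A] @ trans A @ map (\<lambda>b. if b then 1 else 0) (final A)"

lemma dfa_code_eq_list_encode: "dfa_code A = list_encode (dfa_code_list A)"
  by (simp add: dfa_code_def dfa_code_list_def)

lemma code_nth_dfa_code:
  assumes wf: "dfa_wf A"
  shows "code_nth (dfa_code A) 0 = nstates A"
    and "code_nth (dfa_code A) 1 = init A"
    and "i < 4 * nstates A \<Longrightarrow> code_nth (dfa_code A) (2 + i) = trans A ! i"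
    and "q < nstates A \<Longrightarrow> code_nth (dfa_code A) (2 + 4 * nstates A + q) = (if final A ! q then 1 else 0)"
proof -
  have len: "length (dfa_code_list A) = 2 + 4 * nstates A + nstates A"
    using wf by (simp add: dfa_code_list_def dfa_wf_def)
  show "code_nth (dfa_code A) 0 = nstates A"
    using code_nth_list_encode[of 0 "dfa_code_list A"] len by (simp add: dfa_code_eq_list_encode dfa_code_list_def)
  show "code_nth (dfa_code A) 1 = init A"
    using code_nth_list_encode[of 1 "dfa_code_list A"] len by (simp add: dfa_code_eq_list_encode dfa_code_list_def)
  show "i < 4 * nstates A \<Longrightarrow> code_nth (dfa_code A) (2 + i) = trans A ! i"
    using code_nth_list_encode[of "2 + i" "dfa_code_list A"] len wf
    by (simp add: dfa_code_eq_list_encode dfa_code_list_def nth_append dfa_wf_def)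
  show "q < nstates A \<Longrightarrow> code_nth (dfa_code A) (2 + 4 * nstates A + q) = (if final A ! q then 1 else 0)"
    using code_nth_list_encode[of "2 + 4 * nstates A + q" "dfa_code_list A"] len wf
    by (simp add: dfa_code_eq_list_encode dfa_code_list_def nth_append dfa_wf_def)
qed

text \<open>The code of a DFA lists \<open>[N, q0] @ trans @ final\<close>, so the transition from q on (b1, b2)
  is entry \<open>2 + 4 q + 2 b1 + b2\<close> and the final flag of q is entry \<open>2 + 4 N + q\<close>.\<close>
primrec code_run :: "nat \<Rightarrow> nat \<Rightarrow> nat \<Rightarrow> nat \<Rightarrow> nat \<Rightarrow> nat" where
  "code_run c n v m 0 = code_nth c 1"
| "code_run c n v m (Suc j) = code_nth c (2 + 4 * code_run c n v m j + 2 * zeck_digit n m j + zeck_digit v m j)"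

definition r_code_run :: recf where
  "r_code_run = PrimRec (Comp r_code_nth [Proj 0, r_const 1])
  (Comp r_code_nth [Proj 2, Comp r_add [Comp r_add [r_const 2, Comp r_mult [r_const 4, Proj 1]],
     Comp r_add [Comp r_mult [r_const 2, Comp r_zeck_digit [Proj 3, Proj 5, Proj 0]], Comp r_zeck_digit [Proj 4, Proj 5, Proj 0]]]])"
lemma r_code_run_arity[simp]: "prim_of_arity r_code_run (Suc (Suc (Suc (Suc (Suc 0)))))" by (simp add: r_code_run_def)
lemma r_code_run_val[simp]: "prim_val r_code_run [j, c, n, v, m] = code_run c n v m j"
  by (induction j) (simp_all add: r_code_run_def add.assoc)

definition code_accepts :: "nat \<Rightarrow> nat \<Rightarrow> nat \<Rightarrow> nat" where
  "code_accepts c n v = (let m = max (rep_length n) (rep_length v) in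
     if code_nth c (2 + 4 * code_nth c 0 + code_run c n v m m) = 0 then 0 else 1)"

definition r_code_accepts :: recf where
  "r_code_accepts = (let M = Comp r_max [Comp r_rep_length [Proj 1], Comp r_rep_length [Proj 2]] in
   Comp r_is_zero [Comp r_is_zero [Comp r_code_nth [Proj 0, Comp r_add [Comp r_add [r_const 2, Comp r_mult [r_const 4, Comp r_code_nth [Proj 0, r_const 0]]],
      Comp r_code_run [M, Proj 0, Proj 1, Proj 2, M]]]]])"
lemma r_code_accepts_arity[simp]: "prim_of_arity r_code_accepts (Suc (Suc (Suc 0)))" by (simp add: r_code_accepts_def Let_def)
lemma r_code_accepts_val[simp]: "prim_val r_code_accepts [c, n, v] = code_accepts c n v" by (simp add: r_code_accepts_def code_accepts_def Let_def)

lemma zeck_digit_01: "zeck_digit x m j = 0 \<or> zeck_digit x m j = 1" by (simp add: zeck_digit_def)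

lemma foldl_take_Suc: "j < length xs \<Longrightarrow> foldl f s (take (Suc j) xs) = f (foldl f s (take j xs)) (xs ! j)"
  by (simp add: take_Suc_conv_app_nth)

lemma dfa_step_less: "dfa_wf A \<Longrightarrow> q < nstates A \<Longrightarrow> dfa_step A q c < nstates A"
proof -
  assume wf: "dfa_wf A" and q: "q < nstates A"
  have "4 * q + 2 * (if fst c then 1 else 0) + (if snd c then 1 else 0) < length (trans A)"
    using wf q by (simp add: dfa_wf_def)
  then show ?thesis using wf by (auto simp: dfa_step_def dfa_wf_def)
qed

lemma foldl_dfa_step_less: "dfa_wf A \<Longrightarrow> q < nstates A \<Longrightarrow> foldl (dfa_step A) q w < nstates A"
  by (induction w arbitrary: q) (auto intro: dfa_step_less)

lemma code_accepts_correct: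
  assumes wf: "dfa_wf A"
  shows "code_accepts (dfa_code A) n v = (if dfa_accepts A (pad_pair (fib_rep n) (fib_rep v)) then 1 else 0)"
proof -
  define m where "m = max (length (fib_rep n)) (length (fib_rep v))"
  define word where "word = zip (padded_rep n m) (padded_rep v m)"
  have tn: "length (padded_rep n m) = m" and tv: "length (padded_rep v m) = m"
    using padded_rep_props[of n m] padded_rep_props[of v m] by (auto simp: m_def)
  have lw: "length word = m" using tn tv by (simp add: word_def)
  have wj: "j < m \<Longrightarrow> word ! j = (zeck_digit n m j = 1, zeck_digit v m j = 1)" for j
    using padded_rep_nth[of n m j] padded_rep_nth[of v m j] tn tv by (auto simp: word_def m_def)
  have dfa_run: "j \<le> m \<Longrightarrow> code_run (dfa_code A) n v m j = foldl (dfa_step A) (init A) (take j word)" for j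
  proof (induction j)
    case 0 then show ?case using code_nth_dfa_code(2)[OF wf] by simp
  next
    case (Suc j)
    then have j: "j < m" by simp
    let ?q = "foldl (dfa_step A) (init A) (take j word)"
    have q: "?q < nstates A" using foldl_dfa_step_less[OF wf] wf by (simp add: dfa_wf_def)
    have coord: "4 * ?q + 2 * zeck_digit n m j + zeck_digit v m j < 4 * nstates A"
      using q zeck_digit_01[of n m j] zeck_digit_01[of v m j] by auto
    have "code_run (dfa_code A) n v m (Suc j) = trans A ! (4 * ?q + 2 * zeck_digit n m j + zeck_digit v m j)"
      using Suc j code_nth_dfa_code(3)[OF wf coord] by (simp add: add.assoc)
    also have "\<dots> = dfa_step A ?q (word ! j)"
      using wj[OF j] zeck_digit_01[of n m j] zeck_digit_01[of v m j] by (auto simp: dfa_step_def)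
    also have "\<dots> = foldl (dfa_step A) (init A) (take (Suc j) word)"
      using foldl_take_Suc[of j word "dfa_step A" "init A"] lw j by simp
    finally show ?case .
  qed
  have pw: "pad_pair (fib_rep n) (fib_rep v) = word" by (simp add: pad_pair_padded_rep word_def m_def)
  have zl: "max (rep_length n) (rep_length v) = m" by (simp add: rep_length_eq m_def)
  let ?q = "foldl (dfa_step A) (init A) word"
  have q: "?q < nstates A" using foldl_dfa_step_less[OF wf] wf by (simp add: dfa_wf_def)
  have "code_run (dfa_code A) n v m m = ?q" using dfa_run[of m] lw by simp
  then show ?thesis
    using code_nth_dfa_code(4)[OF wf q] code_nth_dfa_code(1)[OF wf] pw zl
    by (simp add: code_accepts_def dfa_accepts_def Let_def)
qed

section \<open>Pumping\<close>

definition pump :: "nat \<Rightarrow> nat \<Rightarrow> nat \<Rightarrow> 'a list \<Rightarrow> 'a list" where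
  "pump i j m xs = take i xs @ concat (replicate m (drop i (take j xs))) @ drop j xs"

lemma length_concat_replicate: "length (concat (replicate m y)) = m * length y"
  by (induction m) auto

lemma foldl_concat_replicate_fixed: "foldl f q u = q \<Longrightarrow> foldl f q (concat (replicate m u)) = q"
  by (induction m) auto

lemma map_pump: "map h (pump i j m xs) = pump i j m (map h xs)"
  by (simp add: pump_def map_concat take_map drop_map)

lemma length_pump:
  "i \<le> j \<Longrightarrow> j \<le> length xs \<Longrightarrow> length (pump i j m xs) = length xs - (j - i) + m * (j - i)"
  by (simp add: pump_def length_concat_replicate)

lemma pump_zip:
  assumes "length xs = length ys"
  shows "pump i j m (zip xs ys) = zip (pump i j m xs) (pump i j m ys)"
proof -
  have "pump i j m (zip xs ys) = zip (map fst (pump i j m (zip xs ys))) (map snd (pump i j m (zip xs ys)))"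
    by (simp add: zip_map_fst_snd)
  then show ?thesis using assms by (simp add: map_pump)
qed

lemma pump_replicate_append:
  assumes "i \<le> j" "j \<le> k"
  shows "pump i j m (replicate k x @ ys) = replicate (k - (j - i) + m * (j - i)) x @ ys"
proof -
  have "concat (replicate m (replicate (j - i) x)) = replicate (m * (j - i)) x"
    by (induction m) (auto simp: replicate_add)
  then have "pump i j m (replicate k x @ ys) = replicate i x @ replicate (m * (j - i)) x @ replicate (k - j) x @ ys"
    using assms by (simp add: pump_def min_def)
  also have "\<dots> = replicate (k - (j - i) + m * (j - i)) x @ ys"
    using assms by (simp add: replicate_add[symmetric] append_assoc[symmetric] del: append_assoc)
  finally show ?thesis .
qed

lemma foldl_pump:
  assumes "i \<le> j" and loop: "foldl f q (take i xs) = foldl f q (take j xs)"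
  shows "foldl f q (pump i j m xs) = foldl f q xs"
proof -
  let ?p = "foldl f q (take i xs)"
  have take_j: "take j xs = take i xs @ drop i (take j xs)"
    using assms(1) by (metis append_take_drop_id min.absorb1 take_take)
  have "foldl f ?p (drop i (take j xs)) = ?p"
    using loop by (subst (asm) take_j) simp
  then have "foldl f q (pump i j m xs) = foldl f ?p (drop j xs)"
    by (simp add: pump_def foldl_concat_replicate_fixed)
  also have "\<dots> = foldl f q xs"
    using loop by (metis append_take_drop_id foldl_append)
  finally show ?thesis .
qed

lemma no_adj_ones_take: "no_adj_ones w \<Longrightarrow> no_adj_ones (take j w)"
  using no_adj_ones_append[of "take j w" "drop j w"] by simp

lemma no_adj_ones_concat_replicate: "no_adj_ones y \<Longrightarrow> y \<noteq> [] \<Longrightarrow> \<not> last y \<Longrightarrow>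
   no_adj_ones (concat (replicate m y)) \<and> (m > 0 \<longrightarrow> concat (replicate m y) \<noteq> [] \<and> \<not> last (concat (replicate m y)))"
proof (induction m)
  case 0 then show ?case by simp
next
  case (Suc m) then show ?case by (cases m) (auto simp: no_adj_ones_append)
qed

lemma canonical_pump:
  assumes cf: "canonical f" and ij: "0 < i" "i < j" "j \<le> length f"
    and zeros: "\<not> f ! (i - 1)" "\<not> f ! (j - 1)"
  shows "canonical (pump i j m f)"
proof -
  have naf: "no_adj_ones f" and hdf: "hd f" using cf ij by (auto simp: canonical_def)
  let ?x = "take i f" and ?y = "drop i (take j f)" and ?z = "drop j f"
  have "last ?x = f ! (i - 1)" using ij take_Suc_conv_app_nth[of "i - 1" f] by simp
  then have x: "no_adj_ones ?x" "?x \<noteq> []" "\<not> last ?x" "hd ?x"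
    using no_adj_ones_take[OF naf] ij zeros(1) hdf by (auto simp: hd_take)
  have y: "no_adj_ones ?y" "?y \<noteq> []" "\<not> last ?y"
    using no_adj_ones_drop[OF no_adj_ones_take[OF naf]] ij zeros(2) by (auto simp: last_conv_nth)
  have z: "no_adj_ones ?z" using naf by (rule no_adj_ones_drop)
  have yz: "no_adj_ones (concat (replicate m ?y) @ ?z)"
    using no_adj_ones_concat_replicate[OF y] z by (cases "m = 0") (auto simp: no_adj_ones_append)
  then have "no_adj_ones (?x @ concat (replicate m ?y) @ ?z)"
    using x by (auto simp: no_adj_ones_append)
  then show ?thesis using x by (simp add: canonical_def pump_def)
qed

lemma exists_zero_cuts_same_value:
  fixes P :: "nat \<Rightarrow> nat"
  assumes naf: "no_adj_ones f" and long: "2 * N + 1 < length f" and P: "\<And>i. P i < N"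
  shows "\<exists>i j. 0 < i \<and> i < j \<and> j \<le> 2 * N + 2 \<and> \<not> f ! (i - 1) \<and> \<not> f ! (j - 1) \<and> P i = P j"
proof -
  text \<open>Among the digits at positions 2t and 2t+1 at least one is 0; cut just after it.\<close>
  define cut where "cut t = (if f ! (2 * t) then 2 * t + 2 else 2 * t + 1)" for t
  have cut_mono: "t < u \<Longrightarrow> cut t < cut u" for t u by (simp add: cut_def)
  have cut_zero: "\<not> f ! (cut t - 1)" if "t \<le> N" for t
  proof (cases "f ! (2 * t)")
    case True
    moreover have "Suc (2 * t) < length f" using that long by simp
    ultimately show ?thesis using naf unfolding no_adj_ones_def cut_def by auto
  qed (simp add: cut_def)
  have "\<not> inj_on (\<lambda>t. P (cut t)) {..N}"
  proof
    assume "inj_on (\<lambda>t. P (cut t)) {..N}"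
    then have "card {..N} \<le> card {..<N}" by (rule card_inj_on_le) (auto simp: P)
    then show False by simp
  qed
  then obtain t u where tu: "t \<le> N" "u \<le> N" "t < u" "P (cut t) = P (cut u)"
    unfolding inj_on_def by (metis atMost_iff linorder_neqE_nat)
  show ?thesis
    using tu cut_mono[of t u] cut_zero[of t] cut_zero[of u]
    by (intro exI[of _ "cut t"] exI[of _ "cut u"]) (auto simp: cut_def)
qed

lemma pad_pair_longer: "length s \<le> length f \<Longrightarrow> pad_pair f s = zip f (replicate (length f - length s) False @ s)"
  by (simp add: pad_pair_def Let_def max_def)

text \<open>The pumped segment lies in the leading block where the second track is still 0.\<close>
lemma dfa_pumping:
  assumes wf: "dfa_wf A" and cf: "canonical f" and len: "length f = length s + k"
    and k: "2 * nstates A + 3 \<le> k"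
  shows "\<exists>d. 1 \<le> d \<and> d \<le> 2 * nstates A + 2 \<and>
     (\<forall>m. \<exists>f'. canonical f' \<and> length f' + d = length f + m * d \<and>
        (dfa_accepts A (pad_pair f' s) \<longleftrightarrow> dfa_accepts A (pad_pair f s)))"
proof -
  let ?N = "nstates A"
  define g where "g = replicate k False @ s"
  define W where "W = zip f g"
  have W: "pad_pair f s = W" using len by (simp add: W_def g_def pad_pair_longer)
  have lg: "length g = length f" using len by (simp add: g_def)
  define P where "P i = foldl (dfa_step A) (init A) (take i W)" for i
  have "\<And>i. P i < ?N" using foldl_dfa_step_less[OF wf] wf by (simp add: P_def dfa_wf_def)
  moreover have "no_adj_ones f" using cf by (simp add: canonical_def)
  ultimately obtain i j where ij: "0 < i" "i < j" "j \<le> 2 * ?N + 2"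
    and zeros: "\<not> f ! (i - 1)" "\<not> f ! (j - 1)" and loop: "P i = P j"
    using exists_zero_cuts_same_value[of f ?N P] len k by fastforce
  have jf: "j \<le> length f" and jk: "j \<le> k" using ij len k by auto
  show ?thesis
  proof (intro exI conjI allI)
    show "1 \<le> j - i" "j - i \<le> 2 * ?N + 2" using ij by auto
    fix m
    let ?f' = "pump i j m f"
    have lf': "length ?f' = length f - (j - i) + m * (j - i)" using ij jf by (simp add: length_pump)
    have "length ?f' - length s = k - (j - i) + m * (j - i)" using lf' len ij jk by simp
    then have "pad_pair ?f' s = zip ?f' (pump i j m g)"
      using lf' ij jk len by (simp add: pad_pair_longer g_def pump_replicate_append)
    also have "\<dots> = pump i j m W" using lg by (simp add: W_def pump_zip)
    finally have "foldl (dfa_step A) (init A) (pad_pair ?f' s) = foldl (dfa_step A) (init A) W"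
      using foldl_pump[of i j] ij loop by (simp add: P_def)
    then show "dfa_accepts A (pad_pair ?f' s) \<longleftrightarrow> dfa_accepts A (pad_pair f s)"
      by (simp add: dfa_accepts_def W)
    show "canonical ?f'" using canonical_pump[OF cf] ij jf zeros by simp
    show "length ?f' + (j - i) = length f + m * (j - i)" using lf' ij jf by simp
  qed
qed

lemma synchronized_accepts: "fib_synchronized_by A a \<Longrightarrow> dfa_accepts A (pad_pair (fib_rep n) (fib_rep x)) \<longleftrightarrow> x = a n"
  by (simp add: fib_synchronized_by_def)

lemma fiber_pumping:
  assumes sy: "fib_synchronized_by A a" and an: "a n = v"
    and long: "length (fib_rep v) + 2 * nstates A + 3 \<le> length (fib_rep n)"
  shows "\<exists>d. 1 \<le> d \<and> d \<le> 2 * nstates A + 2 \<and>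
     (\<forall>m. \<exists>n'. a n' = v \<and> length (fib_rep n') + d = length (fib_rep n) + m * d)"
proof -
  have wf: "dfa_wf A" using sy by (simp add: fib_synchronized_by_def)
  have len: "length (fib_rep n) = length (fib_rep v) + (length (fib_rep n) - length (fib_rep v))"
    using long by simp
  obtain d where d: "1 \<le> d" "d \<le> 2 * nstates A + 2" and P: "\<forall>m. \<exists>f'. canonical f' \<and>
      length f' + d = length (fib_rep n) + m * d \<and>
      (dfa_accepts A (pad_pair f' (fib_rep v)) \<longleftrightarrow> dfa_accepts A (pad_pair (fib_rep n) (fib_rep v)))"
    using dfa_pumping[OF wf canonical_fib_rep len] long by fastforce
  have "\<exists>n'. a n' = v \<and> length (fib_rep n') + d = length (fib_rep n) + m * d" for m
  proof -
    obtain f' where f': "canonical f'" "length f' + d = length (fib_rep n) + m * d"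
      "dfa_accepts A (pad_pair f' (fib_rep v)) \<longleftrightarrow> dfa_accepts A (pad_pair (fib_rep n) (fib_rep v))"
      using P by blast
    have "fib_rep (zeck_val f') = f'" by (rule fib_rep_zeck_val[OF f'(1)])
    then show ?thesis using f' an synchronized_accepts[OF sy]
      by (intro exI[of _ "zeck_val f'"]) metis
  qed
  then show ?thesis using d by blast
qed

section \<open>Fibers of synchronized sequences\<close>

definition pump_gap :: "dfa \<Rightarrow> nat" where "pump_gap A = 2 * nstates A + 4"

lemma infinite_fiber_if_long:
  assumes sy: "fib_synchronized_by A a" and an: "a n = v"
    and long: "length (fib_rep v) + pump_gap A < length (fib_rep n)"
  shows "infinite {n. a n = v}"
proof -
  obtain d where d: "1 \<le> d" and P: "\<forall>m. \<exists>n'. a n' = v \<and> length (fib_rep n') + d = length (fib_rep n) + m * d"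
    using fiber_pumping[OF sy an] long by (fastforce simp: pump_gap_def)
  obtain h where h: "\<And>m. a (h m) = v \<and> length (fib_rep (h m)) + d = length (fib_rep n) + m * d"
    using P by metis
  have "inj h"
  proof (rule injI)
    fix x y assume "h x = h y"
    then have "length (fib_rep (h x)) = length (fib_rep (h y))" by simp
    then have "x * d = y * d" using h[of x] h[of y] by linarith
    then show "x = y" using d by simp
  qed
  moreover have "range h \<subseteq> {n. a n = v}" using h by auto
  ultimately show ?thesis by (metis finite_imageD finite_subset infinite_UNIV_nat)
qed

text \<open>Pumping down by the period d \<le> 2N+2 lands every long element of a fiber in the window
  of lengths (L + gap, L + 2 gap].\<close>
lemma fiber_shrink:
  assumes sy: "fib_synchronized_by A a"
  shows "a n = v \<Longrightarrow> length (fib_rep v) + pump_gap A < length (fib_rep n) \<Longrightarrow>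
    \<exists>n'. a n' = v \<and> length (fib_rep v) + pump_gap A < length (fib_rep n') \<and>
         length (fib_rep n') \<le> length (fib_rep v) + 2 * pump_gap A"
proof (induction "length (fib_rep n)" arbitrary: n rule: less_induct)
  case less
  show ?case
  proof (cases "length (fib_rep n) \<le> length (fib_rep v) + 2 * pump_gap A")
    case True then show ?thesis using less.prems by blast
  next
    case False
    obtain d where d: "1 \<le> d" "d \<le> 2 * nstates A + 2" and P: "\<forall>m. \<exists>n'. a n' = v \<and> length (fib_rep n') + d = length (fib_rep n) + m * d"
      using fiber_pumping[OF sy less.prems(1)] less.prems(2) by (fastforce simp: pump_gap_def)
    obtain n0 where n0: "a n0 = v" "length (fib_rep n0) + d = length (fib_rep n)" using P[rule_format, of 0] by auto
    have "length (fib_rep n0) < length (fib_rep n)" using n0 d by simp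
    moreover have "length (fib_rep v) + pump_gap A < length (fib_rep n0)" using n0 d False by (simp add: pump_gap_def)
    ultimately show ?thesis using less.hyps n0 by blast
  qed
qed

lemma finite_fiber_short:
  assumes sy: "fib_synchronized_by A a" and fin: "finite {n. a n = v}" and an: "a n = v"
  shows "length (fib_rep n) \<le> length (fib_rep v) + pump_gap A"
  using fiber_shrink[OF sy an] infinite_fiber_if_long[OF sy] fin by (metis not_le)

lemma synchronized_wf: "fib_synchronized_by A a \<Longrightarrow> dfa_wf A" by (simp add: fib_synchronized_by_def)

lemma code_accepts_synchronized: "fib_synchronized_by A a \<Longrightarrow> code_accepts (dfa_code A) n v = (if a n = v then 1 else 0)"
  using code_accepts_correct[OF synchronized_wf] synchronized_accepts by metis

text \<open>With L the length of the representation of v, the near count is the size of the fiber of v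
  when it is finite, and the far count is nonzero iff the fiber is infinite.\<close>
definition code_gap :: "nat \<Rightarrow> nat" where "code_gap c = 2 * code_nth c 0 + 4"
definition code_near_count :: "nat \<Rightarrow> nat \<Rightarrow> nat \<Rightarrow> nat" where
  "code_near_count c L v = (\<Sum>n<fib (L + code_gap c + 2). code_accepts c n v)"
definition code_far_count :: "nat \<Rightarrow> nat \<Rightarrow> nat \<Rightarrow> nat" where
  "code_far_count c L v = (\<Sum>n<fib (L + 2 * code_gap c + 2). (if fib (L + code_gap c + 2) \<le> n then 1 else 0) * code_accepts c n v)"

definition r_code_gap :: recf where
  "r_code_gap = Comp r_add [Comp r_mult [r_const 2, Comp r_code_nth [Proj 0, r_const 0]], r_const 4]"
lemma r_code_gap_arity[simp]: "prim_of_arity r_code_gap (Suc n)" by (simp add: r_code_gap_def)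
lemma r_code_gap_val[simp]: "prim_val r_code_gap (c # xs) = code_gap c" by (simp add: r_code_gap_def code_gap_def)

definition r_code_near_count :: recf where
  "r_code_near_count = Comp (r_sum_below (Suc (Suc (Suc 0))) (Comp r_code_accepts [Proj 1, Proj 0, Proj 3]))
   [Comp r_fib [Comp r_add [Comp r_add [Proj 1, r_code_gap], r_const 2]], Proj 0, Proj 1, Proj 2]"
lemma r_code_near_count_arity[simp]: "prim_of_arity r_code_near_count (Suc (Suc (Suc 0)))" by (simp add: r_code_near_count_def)
lemma r_code_near_count_val[simp]: "prim_val r_code_near_count [c, L, v] = code_near_count c L v" by (simp add: r_code_near_count_def code_near_count_def)

definition r_code_far_count :: recf where
  "r_code_far_count = Comp (r_sum_below (Suc (Suc (Suc 0))) (Comp r_mult [Comp r_le [Comp r_fib [Comp r_add [Comp r_add [Proj 2, Comp r_code_gap [Proj 1]], r_const 2]], Proj 0],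
     Comp r_code_accepts [Proj 1, Proj 0, Proj 3]]))
   [Comp r_fib [Comp r_add [Comp r_add [Proj 1, Comp r_mult [r_const 2, r_code_gap]], r_const 2]], Proj 0, Proj 1, Proj 2]"
lemma r_code_far_count_arity[simp]: "prim_of_arity r_code_far_count (Suc (Suc (Suc 0)))" by (simp add: r_code_far_count_def)
lemma r_code_far_count_val[simp]: "prim_val r_code_far_count [c, L, v] = code_far_count c L v" by (simp add: r_code_far_count_def code_far_count_def)

lemma code_gap_dfa_code: "dfa_wf A \<Longrightarrow> code_gap (dfa_code A) = pump_gap A"
  by (simp add: code_gap_def pump_gap_def code_nth_dfa_code)

lemma sum_indicator_eq_card: "(\<Sum>n<(U::nat). if P n then 1 else 0) = card {n. n < U \<and> P n}"
proof -
  have "card {n \<in> {..<U}. P n} = (\<Sum>n\<in>{n \<in> {..<U}. P n}. 1)" by simp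
  also have "\<dots> = (\<Sum>n<U. if P n then 1 else 0)" by (rule sum.inter_filter) simp
  finally show ?thesis by (simp add: lessThan_def Collect_conj_eq[symmetric])
qed

lemma fib_le_iff_length_fib_rep: "fib (X + 2) \<le> n \<longleftrightarrow> X < length (fib_rep n)"
  by (metis length_fib_rep_le_iff not_le)
lemma less_fib_iff_length_fib_rep: "n < fib (X + 2) \<longleftrightarrow> length (fib_rep n) \<le> X"
  by (metis length_fib_rep_le_iff)

lemma code_near_count_eq:
  assumes sy: "fib_synchronized_by A a"
  shows "code_near_count (dfa_code A) L v = card {n. length (fib_rep n) \<le> L + pump_gap A \<and> a n = v}"
proof -
  have "code_near_count (dfa_code A) L v = (\<Sum>n<fib (L + pump_gap A + 2). if a n = v then 1 else 0)"
    unfolding code_near_count_def code_gap_dfa_code[OF synchronized_wf[OF sy]]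
    by (rule sum.cong) (simp_all add: code_accepts_synchronized[OF sy])
  also have "\<dots> = card {n. n < fib (L + pump_gap A + 2) \<and> a n = v}" by (rule sum_indicator_eq_card)
  finally show ?thesis by (simp only: less_fib_iff_length_fib_rep)
qed

lemma code_far_count_eq:
  assumes sy: "fib_synchronized_by A a"
  shows "code_far_count (dfa_code A) L v =
    card {n. L + pump_gap A < length (fib_rep n) \<and> length (fib_rep n) \<le> L + 2 * pump_gap A \<and> a n = v}"
proof -
  let ?E = "pump_gap A"
  have "code_far_count (dfa_code A) L v = (\<Sum>n<fib (L + 2 * ?E + 2). if fib (L + ?E + 2) \<le> n \<and> a n = v then 1 else 0)"
    unfolding code_far_count_def code_gap_dfa_code[OF synchronized_wf[OF sy]]
    by (rule sum.cong) (simp_all add: code_accepts_synchronized[OF sy])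
  also have "\<dots> = card {n. n < fib (L + 2 * ?E + 2) \<and> (fib (L + ?E + 2) \<le> n \<and> a n = v)}"
    by (rule sum_indicator_eq_card)
  finally show ?thesis by (simp only: less_fib_iff_length_fib_rep fib_le_iff_length_fib_rep conj_ac)
qed

lemma code_far_count_nonzero_iff:
  assumes sy: "fib_synchronized_by A a"
  shows "code_far_count (dfa_code A) (length (fib_rep v)) v \<noteq> 0 \<longleftrightarrow> infinite {n. a n = v}"
proof -
  let ?L = "length (fib_rep v)" and ?E = "pump_gap A"
  let ?S = "{n. ?L + ?E < length (fib_rep n) \<and> length (fib_rep n) \<le> ?L + 2 * ?E \<and> a n = v}"
  have "?S \<subseteq> {..<fib (?L + 2 * ?E + 2)}"
    using less_fib_iff_length_fib_rep[of _ "?L + 2 * ?E"] by auto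
  then have "finite ?S" by (rule finite_subset) simp
  then have nonzero: "code_far_count (dfa_code A) ?L v \<noteq> 0 \<longleftrightarrow> ?S \<noteq> {}"
    by (simp add: code_far_count_eq[OF sy])
  show ?thesis
  proof
    assume "code_far_count (dfa_code A) ?L v \<noteq> 0"
    then obtain n where "a n = v" "?L + ?E < length (fib_rep n)" using nonzero by blast
    then show "infinite {n. a n = v}" by (rule infinite_fiber_if_long[OF sy])
  next
    assume inf: "infinite {n. a n = v}"
    then obtain n where an: "a n = v" and "\<not> n < fib (?L + ?E + 2)"
      by (metis (mono_tags, lifting) finite_nat_set_iff_bounded mem_Collect_eq)
    then have "?L + ?E < length (fib_rep n)" by (simp only: less_fib_iff_length_fib_rep not_le)
    then have "?S \<noteq> {}" using fiber_shrink[OF sy an] by blast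
    then show "code_far_count (dfa_code A) ?L v \<noteq> 0" using nonzero by blast
  qed
qed

lemma code_near_count_eq_card:
  assumes sy: "fib_synchronized_by A a" and fin: "finite {n. a n = v}"
  shows "code_near_count (dfa_code A) (length (fib_rep v)) v = card {n. a n = v}"
  using finite_fiber_short[OF sy fin] by (simp add: code_near_count_eq[OF sy]) (metis (mono_tags))

definition same_fiber_card :: "(nat \<Rightarrow> nat) \<Rightarrow> (nat \<Rightarrow> nat) \<Rightarrow> nat \<Rightarrow> bool" where
  "same_fiber_card a b v \<longleftrightarrow> (finite {n. a n = v} \<longleftrightarrow> finite {n. b n = v}) \<and> card {n. a n = v} = card {n. b n = v}"

lemma same_fiber_card_if_perm: "is_perm_of a b \<Longrightarrow> same_fiber_card a b v"
proof -
  assume "is_perm_of a b"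
  then obtain \<sigma> where bij: "bij \<sigma>" and e: "\<And>n. a n = b (\<sigma> n)" by (auto simp: is_perm_of_def)
  have "bij_betw \<sigma> {n. a n = v} {n. b n = v}"
  proof (rule bij_betw_imageI)
    show "inj_on \<sigma> {n. a n = v}" using bij bij_is_inj inj_on_subset by blast
    show "\<sigma> ` {n. a n = v} = {n. b n = v}"
    proof
      show "\<sigma> ` {n. a n = v} \<subseteq> {n. b n = v}" using e by auto
      show "{n. b n = v} \<subseteq> \<sigma> ` {n. a n = v}"
      proof
        fix m assume m: "m \<in> {n. b n = v}"
        obtain n where "m = \<sigma> n" using bij by (metis bij_pointE)
        then show "m \<in> \<sigma> ` {n. a n = v}" using m e by auto
      qed
    qed
  qed
  then show ?thesis using bij_betw_finite bij_betw_same_card by (auto simp: same_fiber_card_def)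
qed

lemma bij_betw_fibers: "same_fiber_card a b v \<Longrightarrow> \<exists>h. bij_betw h {n. a n = v} {n. b n = v}"
proof -
  assume f: "same_fiber_card a b v"
  show ?thesis
  proof (cases "finite {n. a n = v}")
    case True
    then show ?thesis using f finite_same_card_bij by (auto simp: same_fiber_card_def)
  next
    case False
    then have inf: "infinite {n. b n = v}" using f by (auto simp: same_fiber_card_def)
    have "bij_betw (enumerate {n. b n = v} \<circ> inv_into UNIV (enumerate {n. a n = v})) {n. a n = v} {n. b n = v}"
      by (rule bij_betw_trans[OF bij_betw_inv_into[OF bij_enumerate[OF False]] bij_enumerate[OF inf]])
    then show ?thesis by blast
  qed
qed

lemma perm_if_same_fiber_card: "(\<forall>v. same_fiber_card a b v) \<Longrightarrow> is_perm_of a b"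
proof -
  assume all: "\<forall>v. same_fiber_card a b v"
  then have "\<forall>v. \<exists>h. bij_betw h {n. a n = v} {n. b n = v}" using bij_betw_fibers by blast
  then obtain H where H: "\<And>v. bij_betw (H v) {n. a n = v} {n. b n = v}" by metis
  define \<sigma> where "\<sigma> n = H (a n) n" for n
  have mem: "b (\<sigma> n) = a n" for n
    using bij_betwE[OF H[of "a n"]] by (simp add: \<sigma>_def)
  have "bij \<sigma>"
  proof (rule bijI)
    show "inj \<sigma>"
    proof (rule injI)
      fix x y assume xy: "\<sigma> x = \<sigma> y"
      then have "a x = a y" using mem by metis
      then have "H (a x) x = H (a x) y" using xy by (simp add: \<sigma>_def)
      moreover have "inj_on (H (a x)) {n. a n = a x}" using H bij_betw_def by blast
      ultimately show "x = y" using \<open>a x = a y\<close> by (auto dest: inj_onD)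
    qed
    show "surj \<sigma>"
    proof -
      have "m \<in> range \<sigma>" for m
      proof -
        have "m \<in> H (b m) ` {n. a n = b m}" using bij_betw_imp_surj_on[OF H[of "b m"]] by simp
        then obtain n where "a n = b m" "m = H (b m) n" by auto
        then have "m = \<sigma> n" by (simp add: \<sigma>_def)
        then show ?thesis by blast
      qed
      then show ?thesis by auto
    qed
  qed
  then show ?thesis using mem by (auto simp: is_perm_of_def)
qed

lemma is_perm_of_iff_same_fiber_card: "is_perm_of a b \<longleftrightarrow> (\<forall>v. same_fiber_card a b v)"
  using same_fiber_card_if_perm perm_if_same_fiber_card by blast

definition code_fibers_agree :: "nat \<Rightarrow> nat \<Rightarrow> nat \<Rightarrow> bool" where
  "code_fibers_agree cA cB v = (let L = rep_length v in (code_far_count cA L v \<noteq> 0 \<and> code_far_count cB L v \<noteq> 0) \<or>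
     (code_far_count cA L v = 0 \<and> code_far_count cB L v = 0 \<and> code_near_count cA L v = code_near_count cB L v))"

definition r_code_fibers_agree :: recf where
  "r_code_fibers_agree = (let L = Comp r_rep_length [Proj 2];
    X = Comp r_is_zero [Comp r_code_far_count [Proj 0, L, Proj 2]]; Y = Comp r_is_zero [Comp r_code_far_count [Proj 1, L, Proj 2]] in
   Comp r_add [Comp r_mult [Comp r_sub [r_const 1, X], Comp r_sub [r_const 1, Y]],
     Comp r_mult [Comp r_mult [X, Y], Comp r_eq [Comp r_code_near_count [Proj 0, L, Proj 2], Comp r_code_near_count [Proj 1, L, Proj 2]]]])"
lemma r_code_fibers_agree_arity[simp]: "prim_of_arity r_code_fibers_agree (Suc (Suc (Suc 0)))" by (simp add: r_code_fibers_agree_def Let_def)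
lemma r_code_fibers_agree_val[simp]: "prim_val r_code_fibers_agree [cA, cB, v] = (if code_fibers_agree cA cB v then 1 else 0)"
  by (simp add: r_code_fibers_agree_def code_fibers_agree_def Let_def)

lemma code_fibers_agree_iff:
  assumes sa: "fib_synchronized_by A a" and sb: "fib_synchronized_by B b"
  shows "code_fibers_agree (dfa_code A) (dfa_code B) v \<longleftrightarrow> same_fiber_card a b v"
  using code_far_count_nonzero_iff[OF sa, of v] code_far_count_nonzero_iff[OF sb, of v] code_near_count_eq_card[OF sa, of v] code_near_count_eq_card[OF sb, of v]
  by (auto simp: code_fibers_agree_def same_fiber_card_def Let_def rep_length_eq)

section \<open>Linear recurrences\<close>

interpretation fun_space: vector_space "\<lambda>(r::real) (x::'a \<Rightarrow> real). (\<lambda>i. r * x i)"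
  by unfold_locales (simp_all add: fun_eq_iff algebra_simps plus_fun_def)

lemma span_linear_image:
  fixes L :: "('a \<Rightarrow> real) \<Rightarrow> ('b \<Rightarrow> real)"
  assumes add: "\<And>x y. L (x + y) = L x + L y" and sc: "\<And>r x. L (\<lambda>i. r * x i) = (\<lambda>i. r * L x i)"
  shows "x \<in> fun_space.span S \<Longrightarrow> L x \<in> fun_space.span (L ` S)"
proof (induction rule: fun_space.span_induct_alt)
  case base
  have "L 0 = L (\<lambda>i. 0 * (0::'a\<Rightarrow>real) i)" by (simp add: zero_fun_def)
  also have "\<dots> = 0" using sc[of 0 0] by (simp add: zero_fun_def)
  finally have "L 0 = 0" .
  then show ?case by (simp only:) (rule fun_space.span_zero)
next
  case (step c x y)
  have "L ((\<lambda>i. c * x i) + y) = (\<lambda>i. c * L x i) + L y" by (simp add: add sc)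
  moreover have "L x \<in> fun_space.span (L ` S)" using step by (intro fun_space.span_base) simp
  ultimately show ?case using step fun_space.span_add fun_space.span_scale by metis
qed

lemma linear_functional_zero_on_span:
  fixes P :: "('a \<Rightarrow> real) \<Rightarrow> real"
  assumes add: "\<And>x y. P (x + y) = P x + P y" and sc: "\<And>r x. P (\<lambda>i. r * x i) = r * P x"
    and z: "\<And>y. y \<in> S \<Longrightarrow> P y = 0"
  shows "x \<in> fun_space.span S \<Longrightarrow> P x = 0"
proof (induction rule: fun_space.span_induct_alt)
  case base
  have "P 0 = P (\<lambda>i. 0 * (0::'a\<Rightarrow>real) i)" by (simp add: zero_fun_def)
  also have "\<dots> = 0" using sc[of 0 0] by simp
  finally show ?case .
next
  case (step c x y)
  have "P ((\<lambda>i. c * x i) + y) = c * P x + P y" by (simp only: add sc)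
  then show ?case using step z by (simp add: plus_fun_def)
qed

lemma span_chain_stabilizes:
  fixes G :: "nat \<Rightarrow> ('a \<Rightarrow> real) set" and B :: "('a \<Rightarrow> real) set"
  assumes mono: "\<And>i j. i \<le> j \<Longrightarrow> G i \<subseteq> G j"
    and fB: "finite B" and GB: "\<And>k. G k \<subseteq> fun_space.span B"
  shows "\<exists>k\<le>card B. G (Suc k) \<subseteq> fun_space.span (G k)"
proof (rule ccontr)
  let ?m = "card B"
  assume "\<not> ?thesis"
  then have "\<forall>k\<le>?m. \<exists>y. y \<in> G (Suc k) \<and> y \<notin> fun_space.span (G k)" by auto
  then obtain x where x: "\<And>k. k \<le> ?m \<Longrightarrow> x k \<in> G (Suc k) \<and> x k \<notin> fun_space.span (G k)"
    by metis
  have ind: "j \<le> Suc ?m \<Longrightarrow> fun_space.independent (x ` {..<j}) \<and> card (x ` {..<j}) = j" for j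
  proof (induction j)
    case 0 then show ?case by (simp add: fun_space.independent_empty)
  next
    case (Suc j)
    then have jm: "j \<le> ?m" by simp
    have sub: "x ` {..<j} \<subseteq> fun_space.span (G j)"
    proof
      fix y assume "y \<in> x ` {..<j}"
      then obtain i where i: "i < j" "y = x i" by auto
      then show "y \<in> fun_space.span (G j)" using x[of i] jm mono[of "Suc i" j] fun_space.span_superset[of "G j"] by auto
    qed
    have "fun_space.span (x ` {..<j}) \<subseteq> fun_space.span (G j)" using fun_space.span_mono[OF sub] by (simp only: fun_space.span_span)
    then have nin: "x j \<notin> fun_space.span (x ` {..<j})" using x[OF jm] by blast
    then have "x j \<notin> x ` {..<j}" using fun_space.span_superset[of "x ` {..<j}"] by auto
    moreover have "x ` {..<Suc j} = insert (x j) (x ` {..<j})" by (auto simp: lessThan_Suc)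
    ultimately show ?case using Suc jm nin by (simp add: fun_space.independent_insertI card_insert_if)
  qed
  have "x ` {..<Suc ?m} \<subseteq> fun_space.span B"
  proof
    fix y assume "y \<in> x ` {..<Suc ?m}"
    then obtain i where "i \<le> ?m" "y = x i" by (auto simp: less_Suc_eq_le)
    then show "y \<in> fun_space.span B" using x GB by blast
  qed
  then have "card (x ` {..<Suc ?m}) \<le> ?m" using fun_space.independent_span_bound[OF fB] ind[of "Suc ?m"] by blast
  then show False using ind[of "Suc ?m"] by simp
qed

lemma short_word_functional_nonzero:
  fixes L :: "'c \<Rightarrow> ('a \<Rightarrow> real) \<Rightarrow> ('a \<Rightarrow> real)" and X0 :: "'a \<Rightarrow> real"
    and P :: "('a \<Rightarrow> real) \<Rightarrow> real" and B :: "('a \<Rightarrow> real) set"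
  assumes Ladd: "\<And>c x y. L c (x + y) = L c x + L c y"
    and Lsc: "\<And>c r x. L c (\<lambda>i. r * x i) = (\<lambda>i. r * L c x i)"
    and Padd: "\<And>x y. P (x + y) = P x + P y" and Psc: "\<And>r x. P (\<lambda>i. r * x i) = r * P x"
    and fB: "finite B" and inB: "\<And>s. foldl (\<lambda>x c. L c x) X0 s \<in> fun_space.span B"
    and ex: "P (foldl (\<lambda>x c. L c x) X0 s0) \<noteq> 0"
  shows "\<exists>s. length s \<le> card B \<and> P (foldl (\<lambda>x c. L c x) X0 s) \<noteq> 0"
proof (rule ccontr)
  assume short_zero: "\<not> ?thesis"
  define Xs where "Xs s = foldl (\<lambda>x c. L c x) X0 s" for s
  have Xs_snoc: "Xs (s @ [c]) = L c (Xs s)" for s c by (simp add: Xs_def)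
  define G where "G k = Xs ` {s. length s \<le> k}" for k
  obtain k where k: "k \<le> card B" and Gk: "G (Suc k) \<subseteq> fun_space.span (G k)"
    using span_chain_stabilizes[of G B] fB inB by (fastforce simp: G_def Xs_def)
  have LG: "L c ` G k \<subseteq> G (Suc k)" for c
  proof
    fix y assume "y \<in> L c ` G k"
    then obtain t where "length t \<le> k" "y = L c (Xs t)" by (auto simp: G_def)
    then show "y \<in> G (Suc k)" unfolding G_def by (intro image_eqI[of _ _ "t @ [c]"]) (simp_all add: Xs_snoc)
  qed
  have all: "Xs s \<in> fun_space.span (G k)" for s
  proof (induction s rule: rev_induct)
    case Nil then show ?case by (intro fun_space.span_base) (auto simp: G_def)
  next
    case (snoc c s)
    have "L c (Xs s) \<in> fun_space.span (L c ` G k)" by (rule span_linear_image[OF Ladd Lsc snoc])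
    also have "\<dots> \<subseteq> fun_space.span (G (Suc k))" using fun_space.span_mono[OF LG] .
    also have "\<dots> \<subseteq> fun_space.span (G k)" using fun_space.span_mono[OF Gk] by (simp only: fun_space.span_span)
    finally show ?case by (simp add: Xs_snoc)
  qed
  have "P (Xs s0) = 0"
    by (rule linear_functional_zero_on_span[OF Padd Psc _ all]) (use short_zero k in \<open>auto simp: G_def Xs_def\<close>)
  then show False using ex by (simp add: Xs_def)
qed

section \<open>Counting accepted words\<close>

definition padded_words :: "nat \<Rightarrow> nat \<Rightarrow> bool list \<Rightarrow> (bool \<times> bool) list set" where
  "padded_words lo hi s = {w. \<exists>k f. lo \<le> k \<and> k \<le> hi \<and> length f = k + length s \<and> no_adj_ones f \<and>
      (k = 0 \<or> hd f) \<and> w = zip f (replicate k False @ s)}"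

definition excess_window :: "nat \<Rightarrow> nat \<Rightarrow> bool list \<Rightarrow> nat set" where
  "excess_window lo hi s = {n. lo \<le> length (fib_rep n) - length s \<and> length (fib_rep n) - length s \<le> hi}"

lemma map_fst_pad_pair_fib_rep: "map fst (pad_pair (fib_rep n) s) = replicate (length s - length (fib_rep n)) False @ fib_rep n"
  by (simp add: pad_pair_def Let_def max_def)

lemma pad_pair_fib_rep_mem_padded_words:
  assumes "n \<in> excess_window lo hi s"
  shows "pad_pair (fib_rep n) s \<in> padded_words lo hi s"
proof (cases "length (fib_rep n) \<le> length s")
  case True
  then have "pad_pair (fib_rep n) s =
      zip (replicate (length s - length (fib_rep n)) False @ fib_rep n) (replicate 0 False @ s)"
    by (simp add: pad_pair_def Let_def max_def)
  moreover have "lo \<le> 0" using assms True by (simp add: excess_window_def)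
  ultimately show ?thesis using True no_adj_ones_fib_rep[of n] unfolding padded_words_def
    by (intro CollectI exI[of _ 0] exI[of _ "replicate (length s - length (fib_rep n)) False @ fib_rep n"]) simp
next
  case False
  then have "hd (fib_rep n)" using canonical_fib_rep[of n] by (auto simp: canonical_def)
  moreover have "pad_pair (fib_rep n) s = zip (fib_rep n) (replicate (length (fib_rep n) - length s) False @ s)"
    using False by (simp add: pad_pair_def Let_def max_def)
  ultimately show ?thesis using False assms no_adj_ones_fib_rep[of n] unfolding padded_words_def excess_window_def
    by (intro CollectI exI[of _ "length (fib_rep n) - length s"] exI[of _ "fib_rep n"]) auto
qed

lemma padded_words_pad_pair_fib_rep:
  assumes "w \<in> padded_words lo hi s"
  shows "\<exists>n\<in>excess_window lo hi s. w = pad_pair (fib_rep n) s"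
proof -
  obtain k f where kf: "lo \<le> k" "k \<le> hi" "length f = k + length s" "no_adj_ones f"
    "k = 0 \<or> hd f" "w = zip f (replicate k False @ s)"
    using assms unfolding padded_words_def by blast
  define n where "n = zeck_val f"
  have f: "f = padded_rep n (length f)" using eq_padded_rep_zeck_val[OF kf(4)] by (simp add: n_def)
  show ?thesis
  proof (cases "k = 0")
    case True
    then have lr: "length (fib_rep n) \<le> length s"
      using f kf(3) by (metis le_add2 length_append padded_rep_def add_0 add.commute)
    then have "pad_pair (fib_rep n) s = w"
      using f kf True by (simp add: pad_pair_def Let_def max_def padded_rep_def)
    moreover have "n \<in> excess_window lo hi s" using lr kf True by (simp add: excess_window_def)
    ultimately show ?thesis by blast
  next
    case False
    then have "canonical f" using kf by (auto simp: canonical_def)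
    then have rf: "fib_rep n = f" by (simp add: n_def fib_rep_zeck_val)
    then have "pad_pair (fib_rep n) s = w" using kf by (simp add: pad_pair_longer)
    moreover have "n \<in> excess_window lo hi s" using rf kf by (simp add: excess_window_def)
    ultimately show ?thesis by blast
  qed
qed

lemma bij_betw_excess_window_padded_words:
  "bij_betw (\<lambda>n. pad_pair (fib_rep n) s) (excess_window lo hi s) (padded_words lo hi s)"
proof (rule bij_betw_imageI)
  show "inj_on (\<lambda>n. pad_pair (fib_rep n) s) (excess_window lo hi s)"
  proof (rule inj_onI)
    fix n n' assume "pad_pair (fib_rep n) s = pad_pair (fib_rep n') s"
    then have "zeck_val (map fst (pad_pair (fib_rep n) s)) = zeck_val (map fst (pad_pair (fib_rep n') s))" by simp
    then show "n = n'" by (simp add: map_fst_pad_pair_fib_rep)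
  qed
  show "(\<lambda>n. pad_pair (fib_rep n) s) ` excess_window lo hi s = padded_words lo hi s"
    using pad_pair_fib_rep_mem_padded_words padded_words_pad_pair_fib_rep by blast
qed

lemma card_excess_window_padded_words:
  "card {n \<in> excess_window lo hi s. P (pad_pair (fib_rep n) s)} = card {w \<in> padded_words lo hi s. P w}"
proof -
  have "bij_betw (\<lambda>n. pad_pair (fib_rep n) s) {n \<in> excess_window lo hi s. P (pad_pair (fib_rep n) s)} {w \<in> padded_words lo hi s. P w}"
    using bij_betw_excess_window_padded_words[of s lo hi] unfolding bij_betw_def inj_on_def by auto
  then show ?thesis by (rule bij_betw_same_card)
qed

definition accepted_count :: "dfa \<Rightarrow> nat \<Rightarrow> nat \<Rightarrow> bool list \<Rightarrow> nat" where
  "accepted_count A lo hi s = card {w \<in> padded_words lo hi s. dfa_accepts A w}"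

lemma code_near_count_eq_accepted_count:
  assumes sy: "fib_synchronized_by A a"
  shows "code_near_count (dfa_code A) (length (fib_rep v)) v = accepted_count A 0 (pump_gap A) (fib_rep v)"
proof -
  have "{n. length (fib_rep n) \<le> length (fib_rep v) + pump_gap A \<and> a n = v} =
      {n \<in> excess_window 0 (pump_gap A) (fib_rep v). dfa_accepts A (pad_pair (fib_rep n) (fib_rep v))}"
    by (auto simp: excess_window_def synchronized_accepts[OF sy])
  then show ?thesis
    unfolding code_near_count_eq[OF sy] accepted_count_def
    by (simp add: card_excess_window_padded_words[where P = "dfa_accepts A"])
qed

lemma code_far_count_eq_accepted_count:
  assumes sy: "fib_synchronized_by A a"
  shows "code_far_count (dfa_code A) (length (fib_rep v)) v = accepted_count A (Suc (pump_gap A)) (2 * pump_gap A) (fib_rep v)"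
proof -
  have "{n. length (fib_rep v) + pump_gap A < length (fib_rep n) \<and> length (fib_rep n) \<le> length (fib_rep v) + 2 * pump_gap A \<and> a n = v} =
      {n \<in> excess_window (Suc (pump_gap A)) (2 * pump_gap A) (fib_rep v). dfa_accepts A (pad_pair (fib_rep n) (fib_rep v))}"
    by (auto simp: excess_window_def synchronized_accepts[OF sy])
  then show ?thesis
    unfolding code_far_count_eq[OF sy] accepted_count_def
    by (simp add: card_excess_window_padded_words[where P = "dfa_accepts A"])
qed

lemma card_filter_eq_sum_fibers:
  assumes "finite S" "finite T" "\<And>x. x \<in> S \<Longrightarrow> f x \<in> T"
  shows "card {x \<in> S. P (f x)} = (\<Sum>t\<in>{t \<in> T. P t}. card {x \<in> S. f x = t})"
proof -
  have "{x \<in> S. P (f x)} = (\<Union>t\<in>{t \<in> T. P t}. {x \<in> S. f x = t})" using assms(3) by auto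
  moreover have "card (\<Union>t\<in>{t \<in> T. P t}. {x \<in> S. f x = t}) = (\<Sum>t\<in>{t \<in> T. P t}. card {x \<in> S. f x = t})"
    by (rule card_UN_disjoint) (use assms in auto)
  ultimately show ?thesis by simp
qed

lemma finite_padded_words: "finite (padded_words lo hi s)"
proof -
  have "padded_words lo hi s \<subseteq> {w. set w \<subseteq> UNIV \<and> length w \<le> hi + length s}" by (auto simp: padded_words_def)
  moreover have "finite {w :: (bool \<times> bool) list. set w \<subseteq> UNIV \<and> length w \<le> hi + length s}"
    by (rule finite_lists_length_le) simp
  ultimately show ?thesis by (rule finite_subset)
qed

definition ends_with_one :: "(bool \<times> bool) list \<Rightarrow> bool" where "ends_with_one w \<longleftrightarrow> w \<noteq> [] \<and> fst (last w)"

definition dfa_run :: "dfa \<Rightarrow> (bool \<times> bool) list \<Rightarrow> nat" where "dfa_run A w = foldl (dfa_step A) (init A) w"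

lemma last_zip: "length f = length g \<Longrightarrow> f \<noteq> [] \<Longrightarrow> last (zip f g) = (last f, last g)"
proof (induction f arbitrary: g rule: rev_induct)
  case Nil then show ?case by simp
next
  case (snoc x xs)
  then obtain g' y where "g = g' @ [y]" by (cases g rule: rev_cases) auto
  then show ?case using snoc by simp
qed

lemma ends_with_one_zip: "length f = length g \<Longrightarrow> ends_with_one (zip f g) \<longleftrightarrow> f \<noteq> [] \<and> last f"
  by (cases "f = []") (auto simp: ends_with_one_def last_zip)

lemma snoc_mem_padded_words:
  assumes w: "w \<in> padded_words lo hi s" and d: "\<not> (ends_with_one w \<and> d)"
  shows "w @ [(d, c)] \<in> padded_words lo hi (s @ [c])"
proof -
  obtain k f where kf: "lo \<le> k" "k \<le> hi" "length f = k + length s" "no_adj_ones f"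
      "k = 0 \<or> hd f" "w = zip f (replicate k False @ s)"
    using w unfolding padded_words_def by auto
  have "\<not> (f \<noteq> [] \<and> last f \<and> d)" using d kf by (simp add: ends_with_one_zip)
  then have "no_adj_ones (f @ [d])" using kf by (auto simp: no_adj_ones_append)
  moreover have "k = 0 \<or> hd (f @ [d])"
  proof (cases "k = 0")
    case False then have "f \<noteq> []" using kf by auto
    then show ?thesis using kf(5) by simp
  qed simp
  moreover have "w @ [(d, c)] = zip (f @ [d]) (replicate k False @ s @ [c])"
    using kf(3,6) zip_append[of f "replicate k False @ s" "[d]" "[c]"] by simp
  ultimately show ?thesis
    unfolding padded_words_def using kf by (intro CollectI exI[of _ k] exI[of _ "f @ [d]"]) auto
qed

lemma padded_words_snoc_cases:
  assumes "w \<in> padded_words lo hi (s @ [c])"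
  shows "\<exists>w' d. w' \<in> padded_words lo hi s \<and> \<not> (ends_with_one w' \<and> d) \<and> w = w' @ [(d, c)]"
proof -
  obtain k f where kf: "lo \<le> k" "k \<le> hi" "length f = k + length (s @ [c])" "no_adj_ones f"
      "k = 0 \<or> hd f" "w = zip f (replicate k False @ s @ [c])"
    using assms unfolding padded_words_def by auto
  then obtain f' d where f: "f = f' @ [d]" by (cases f rule: rev_cases) auto
  have lf': "length f' = k + length s" using kf f by simp
  have w: "w = zip f' (replicate k False @ s) @ [(d, c)]"
    using kf(6) f lf' zip_append[of f' "replicate k False @ s" "[d]" "[c]"] by simp
  have na: "no_adj_ones f'" "\<not> (f' \<noteq> [] \<and> last f' \<and> d)" using kf(4) f by (auto simp: no_adj_ones_append)
  have hd: "k = 0 \<or> hd f'"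
  proof (cases "k = 0")
    case False then have "f' \<noteq> []" using lf' by auto
    then show ?thesis using kf(5) f by simp
  qed simp
  have "zip f' (replicate k False @ s) \<in> padded_words lo hi s"
    unfolding padded_words_def using kf lf' na hd by blast
  moreover have "\<not> (ends_with_one (zip f' (replicate k False @ s)) \<and> d)"
    using na lf' by (simp add: ends_with_one_zip)
  ultimately show ?thesis using w by blast
qed

lemma padded_words_snoc:
  "padded_words lo hi (s @ [c]) =
    (\<lambda>(w, d). w @ [(d, c)]) ` {(w, d). w \<in> padded_words lo hi s \<and> \<not> (ends_with_one w \<and> d)}"
proof (intro equalityI subsetI)
  fix w assume "w \<in> padded_words lo hi (s @ [c])"
  then obtain w' d where "w' \<in> padded_words lo hi s" "\<not> (ends_with_one w' \<and> d)" "w = w' @ [(d, c)]"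
    using padded_words_snoc_cases by blast
  then show "w \<in> (\<lambda>(w, d). w @ [(d, c)]) ` {(w, d). w \<in> padded_words lo hi s \<and> \<not> (ends_with_one w \<and> d)}"
    by (intro image_eqI[of _ _ "(w', d)"]) auto
qed (auto intro: snoc_mem_padded_words)

definition run_flags :: "dfa \<Rightarrow> (nat \<times> bool) set" where "run_flags A = {..<nstates A} \<times> UNIV"

lemma finite_run_flags: "finite (run_flags A)" by (simp add: run_flags_def)

lemma run_flags_mem: "dfa_wf A \<Longrightarrow> (dfa_run A w, ends_with_one w) \<in> run_flags A"
  using foldl_dfa_step_less[of A "init A" w] by (simp add: run_flags_def dfa_run_def dfa_wf_def)

text \<open>Counts are split by the state reached and by the last digit of the first track, which decides
  whether that track may continue with a 1.\<close>
definition flag_count :: "dfa \<Rightarrow> nat \<Rightarrow> nat \<Rightarrow> bool list \<Rightarrow> nat \<times> bool \<Rightarrow> nat" where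
  "flag_count A lo hi s p = card {w \<in> padded_words lo hi s. (dfa_run A w, ends_with_one w) = p}"

lemma accepted_count_eq_sum_flag_count: "dfa_wf A \<Longrightarrow> accepted_count A lo hi s = (\<Sum>p\<in>{p \<in> run_flags A. final A ! fst p}. flag_count A lo hi s p)"
  unfolding accepted_count_def flag_count_def dfa_accepts_def
  using card_filter_eq_sum_fibers[OF finite_padded_words finite_run_flags, of lo hi s "\<lambda>w. (dfa_run A w, ends_with_one w)" A "\<lambda>p. final A ! fst p"] run_flags_mem
  by (simp add: dfa_run_def)

lemma flag_count_snoc:
  assumes wf: "dfa_wf A"
  shows "flag_count A lo hi (s @ [c]) (q', l') =
    (\<Sum>p\<in>{p \<in> run_flags A. \<not> (snd p \<and> l') \<and> dfa_step A (fst p) (l', c) = q'}. flag_count A lo hi s p)"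
proof -
  have e: "{w' \<in> padded_words lo hi (s @ [c]). (dfa_run A w', ends_with_one w') = (q', l')} =
     (\<lambda>w. w @ [(l', c)]) ` {w \<in> padded_words lo hi s. \<not> (ends_with_one w \<and> l') \<and> dfa_step A (dfa_run A w) (l', c) = q'}"
  proof
    show "{w' \<in> padded_words lo hi (s @ [c]). (dfa_run A w', ends_with_one w') = (q', l')} \<subseteq>
     (\<lambda>w. w @ [(l', c)]) ` {w \<in> padded_words lo hi s. \<not> (ends_with_one w \<and> l') \<and> dfa_step A (dfa_run A w) (l', c) = q'}"
    proof
      fix w' assume a: "w' \<in> {w' \<in> padded_words lo hi (s @ [c]). (dfa_run A w', ends_with_one w') = (q', l')}"
      then obtain w d where wd: "w \<in> padded_words lo hi s" "\<not> (ends_with_one w \<and> d)" "w' = w @ [(d, c)]"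
        unfolding padded_words_snoc by auto
      have "d = l'" using a wd by (simp add: ends_with_one_def)
      then show "w' \<in> (\<lambda>w. w @ [(l', c)]) ` {w \<in> padded_words lo hi s. \<not> (ends_with_one w \<and> l') \<and> dfa_step A (dfa_run A w) (l', c) = q'}"
        using a wd by (auto simp: dfa_run_def)
    qed
    show "(\<lambda>w. w @ [(l', c)]) ` {w \<in> padded_words lo hi s. \<not> (ends_with_one w \<and> l') \<and> dfa_step A (dfa_run A w) (l', c) = q'} \<subseteq>
        {w' \<in> padded_words lo hi (s @ [c]). (dfa_run A w', ends_with_one w') = (q', l')}"
      unfolding padded_words_snoc by (auto simp: dfa_run_def ends_with_one_def)
  qed
  have "flag_count A lo hi (s @ [c]) (q', l') = card {w \<in> padded_words lo hi s. \<not> (ends_with_one w \<and> l') \<and> dfa_step A (dfa_run A w) (l', c) = q'}"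
    unfolding flag_count_def e by (rule card_image) (simp add: inj_on_def)
  also have "\<dots> = card {w \<in> padded_words lo hi s. (\<lambda>p. \<not> (snd p \<and> l') \<and> dfa_step A (fst p) (l', c) = q') (dfa_run A w, ends_with_one w)}"
    by simp
  also have "\<dots> = (\<Sum>p\<in>{p \<in> run_flags A. \<not> (snd p \<and> l') \<and> dfa_step A (fst p) (l', c) = q'}. flag_count A lo hi s p)"
    unfolding flag_count_def by (rule card_filter_eq_sum_fibers[OF finite_padded_words finite_run_flags]) (rule run_flags_mem[OF wf])
  finally show ?thesis .
qed

section \<open>Locating a short disagreement\<close>

text \<open>A coordinate (x, g, q, l) selects the automaton (A if x), the window of lengths (far if g),
  a state q and the last-digit flag l.\<close>
type_synonym coord = "bool \<times> bool \<times> nat \<times> bool"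

definition pick_dfa :: "dfa \<Rightarrow> dfa \<Rightarrow> bool \<Rightarrow> dfa" where "pick_dfa A B x = (if x then A else B)"
definition window_lo :: "dfa \<Rightarrow> bool \<Rightarrow> nat" where "window_lo A g = (if g then Suc (pump_gap A) else 0)"
definition window_hi :: "dfa \<Rightarrow> bool \<Rightarrow> nat" where "window_hi A g = (if g then 2 * pump_gap A else pump_gap A)"

definition coords :: "dfa \<Rightarrow> dfa \<Rightarrow> coord set" where
  "coords A B = {(x, g, q, l). q < nstates (pick_dfa A B x)}"

definition count_vec :: "dfa \<Rightarrow> dfa \<Rightarrow> bool list \<Rightarrow> coord \<Rightarrow> nat" where
  "count_vec A B s i = (case i of (x, g, q, l) \<Rightarrow>
     if q < nstates (pick_dfa A B x) then flag_count (pick_dfa A B x) (window_lo (pick_dfa A B x) g) (window_hi (pick_dfa A B x) g) s (q, l) else 0)"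

definition transfer :: "dfa \<Rightarrow> dfa \<Rightarrow> bool \<Rightarrow> coord \<Rightarrow> coord \<Rightarrow> nat" where
  "transfer A B c i j = (case i of (x', g', q', l') \<Rightarrow> case j of (x, g, q, l) \<Rightarrow>
     if x = x' \<and> g = g' \<and> q < nstates (pick_dfa A B x) \<and> \<not> (l \<and> l') \<and> dfa_step (pick_dfa A B x) q (l', c) = q' then 1 else 0)"

lemma coords_eq: "coords A B = ({True} \<times> UNIV \<times> {..<nstates A} \<times> UNIV) \<union> ({False} \<times> UNIV \<times> {..<nstates B} \<times> UNIV)"
  by (auto simp: coords_def pick_dfa_def split: if_splits)

lemma finite_coords: "finite (coords A B)" by (simp add: coords_eq)

lemma card_coords: "card (coords A B) = 4 * (nstates A + nstates B)"
proof -
  have "card (coords A B) = card ({True} \<times> (UNIV::bool set) \<times> {..<nstates A} \<times> (UNIV::bool set)) +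
      card ({False} \<times> (UNIV::bool set) \<times> {..<nstates B} \<times> (UNIV::bool set))"
    unfolding coords_eq by (rule card_Un_disjoint) auto
  also have "\<dots> = 4 * (nstates A + nstates B)" by (simp add: card_cartesian_product)
  finally show ?thesis .
qed

lemma count_vec_snoc:
  assumes wfA: "dfa_wf A" and wfB: "dfa_wf B" and i: "i \<in> coords A B"
  shows "count_vec A B (s @ [c]) i = (\<Sum>j\<in>coords A B. transfer A B c i j * count_vec A B s j)"
proof -
  obtain x' g' q' l' where iq: "i = (x', g', q', l')" by (cases i) auto
  let ?C = "pick_dfa A B x'" and ?lo = "window_lo (pick_dfa A B x') g'" and ?hi = "window_hi (pick_dfa A B x') g'"
  have wfC: "dfa_wf ?C" using wfA wfB by (simp add: pick_dfa_def)
  have q': "q' < nstates ?C" using i iq by (simp add: coords_def)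
  define Sp where "Sp = {p \<in> run_flags ?C. \<not> (snd p \<and> l') \<and> dfa_step ?C (fst p) (l', c) = q'}"
  define h where "h p = (x', g', fst p, snd p)" for p :: "nat \<times> bool"
  have hinj: "inj_on h Sp" by (auto simp: h_def inj_on_def)
  have hsub: "h ` Sp \<subseteq> coords A B" by (auto simp: h_def Sp_def run_flags_def coords_def)
  have "(\<Sum>j\<in>coords A B. transfer A B c i j * count_vec A B s j) = (\<Sum>j\<in>h ` Sp. transfer A B c i j * count_vec A B s j)"
  proof (rule sum.mono_neutral_right[OF finite_coords hsub])
    show "\<forall>j\<in>coords A B - h ` Sp. transfer A B c i j * count_vec A B s j = 0"
    proof
      fix j assume j: "j \<in> coords A B - h ` Sp"
      obtain x g q l where jq: "j = (x, g, q, l)" by (cases j) auto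
      show "transfer A B c i j * count_vec A B s j = 0"
      proof (cases "x = x' \<and> g = g' \<and> q < nstates (pick_dfa A B x) \<and> \<not> (l \<and> l') \<and> dfa_step (pick_dfa A B x) q (l', c) = q'")
        case True
        then have "j \<in> h ` Sp" using jq by (auto simp: h_def Sp_def run_flags_def intro!: image_eqI[of _ _ "(q, l)"])
        then show ?thesis using j by simp
      next
        case False
        then have "transfer A B c i j = 0" by (simp add: transfer_def iq jq)
        then show ?thesis by simp
      qed
    qed
  qed
  also have "\<dots> = (\<Sum>p\<in>Sp. transfer A B c i (h p) * count_vec A B s (h p))" using sum.reindex[OF hinj] by (simp add: comp_def)
  also have "\<dots> = (\<Sum>p\<in>Sp. flag_count ?C ?lo ?hi s p)"
    by (rule sum.cong) (auto simp: transfer_def iq h_def Sp_def run_flags_def count_vec_def)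
  also have "\<dots> = flag_count ?C ?lo ?hi (s @ [c]) (q', l')" unfolding Sp_def by (rule flag_count_snoc[OF wfC, symmetric])
  also have "\<dots> = count_vec A B (s @ [c]) i" using q' by (simp add: count_vec_def iq)
  finally show ?thesis by simp
qed

definition final_weight :: "dfa \<Rightarrow> dfa \<Rightarrow> bool \<Rightarrow> bool \<Rightarrow> coord \<Rightarrow> nat" where
  "final_weight A B x g i = (case i of (x', g', q, l) \<Rightarrow> if x' = x \<and> g' = g \<and> final (pick_dfa A B x) ! q then 1 else 0)"

lemma accepted_count_eq_weighted_sum:
  assumes wfA: "dfa_wf A" and wfB: "dfa_wf B"
  shows "accepted_count (pick_dfa A B x) (window_lo (pick_dfa A B x) g) (window_hi (pick_dfa A B x) g) s = (\<Sum>i\<in>coords A B. final_weight A B x g i * count_vec A B s i)"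
proof -
  let ?C = "pick_dfa A B x" and ?lo = "window_lo (pick_dfa A B x) g" and ?hi = "window_hi (pick_dfa A B x) g"
  have wfC: "dfa_wf ?C" using wfA wfB by (simp add: pick_dfa_def)
  define Sp where "Sp = {p \<in> run_flags ?C. final ?C ! fst p}"
  define h where "h p = (x, g, fst p, snd p)" for p :: "nat \<times> bool"
  have hinj: "inj_on h Sp" by (auto simp: h_def inj_on_def)
  have hsub: "h ` Sp \<subseteq> coords A B" by (auto simp: h_def Sp_def run_flags_def coords_def)
  have "(\<Sum>i\<in>coords A B. final_weight A B x g i * count_vec A B s i) = (\<Sum>i\<in>h ` Sp. final_weight A B x g i * count_vec A B s i)"
  proof (rule sum.mono_neutral_right[OF finite_coords hsub])
    show "\<forall>j\<in>coords A B - h ` Sp. final_weight A B x g j * count_vec A B s j = 0"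
    proof
      fix j assume j: "j \<in> coords A B - h ` Sp"
      obtain x' g' q l where jq: "j = (x', g', q, l)" by (cases j) auto
      show "final_weight A B x g j * count_vec A B s j = 0"
      proof (cases "x' = x \<and> g' = g \<and> final (pick_dfa A B x) ! q")
        case True
        then have "j \<in> h ` Sp" using jq j by (auto simp: h_def Sp_def run_flags_def coords_def intro!: image_eqI[of _ _ "(q, l)"])
        then show ?thesis using j by simp
      next
        case False
        then have "final_weight A B x g j = 0" by (auto simp: final_weight_def jq)
        then show ?thesis by simp
      qed
    qed
  qed
  also have "\<dots> = (\<Sum>p\<in>Sp. final_weight A B x g (h p) * count_vec A B s (h p))" using sum.reindex[OF hinj] by (simp add: comp_def)
  also have "\<dots> = (\<Sum>p\<in>Sp. flag_count ?C ?lo ?hi s p)"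
    by (rule sum.cong) (auto simp: final_weight_def h_def Sp_def run_flags_def count_vec_def)
  also have "\<dots> = accepted_count ?C ?lo ?hi s" unfolding Sp_def by (rule accepted_count_eq_sum_flag_count[OF wfC, symmetric])
  finally show ?thesis by simp
qed

definition count_support :: "dfa \<Rightarrow> dfa \<Rightarrow> bool list \<Rightarrow> coord set" where
  "count_support A B s = {i \<in> coords A B. count_vec A B s i \<noteq> 0}"

definition canon_status :: "bool list \<Rightarrow> nat" where
  "canon_status s = (if s = [] then 0 else if canonical s then (if last s then 2 else 1) else 3)"

definition canon_status_step :: "nat \<Rightarrow> bool \<Rightarrow> nat" where
  "canon_status_step t c = (if t = 0 then (if c then 2 else 3) else if t = 1 then (if c then 2 else 1)
     else if t = 2 then (if c then 3 else 1) else 3)"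

lemma canonical_snoc: "canonical (s @ [c]) \<longleftrightarrow> (s = [] \<and> c) \<or> (s \<noteq> [] \<and> canonical s \<and> \<not> (last s \<and> c))"
  by (cases "s = []") (auto simp: canonical_def no_adj_ones_append)

lemma canon_status_snoc: "canon_status (s @ [c]) = canon_status_step (canon_status s) c"
  by (auto simp: canon_status_def canon_status_step_def canonical_snoc)

lemma canon_status_less: "canon_status s < 4" by (simp add: canon_status_def)

lemma canon_status_iff: "canon_status s \<noteq> 3 \<longleftrightarrow> canonical s"
  by (auto simp: canon_status_def canonical_def)

type_synonym sig = "coord set \<times> nat"

definition signature :: "dfa \<Rightarrow> dfa \<Rightarrow> bool list \<Rightarrow> sig" where
  "signature A B s = (count_support A B s, canon_status s)"

definition support_step :: "dfa \<Rightarrow> dfa \<Rightarrow> coord set \<Rightarrow> bool \<Rightarrow> coord set" where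
  "support_step A B S c = {i \<in> coords A B. \<exists>j\<in>S. transfer A B c i j \<noteq> 0}"

definition signature_step :: "dfa \<Rightarrow> dfa \<Rightarrow> sig \<Rightarrow> bool \<Rightarrow> sig" where
  "signature_step A B \<tau> c = (support_step A B (fst \<tau>) c, canon_status_step (snd \<tau>) c)"

definition signatures :: "dfa \<Rightarrow> dfa \<Rightarrow> sig set" where
  "signatures A B = Pow (coords A B) \<times> {..<4}"

lemma finite_signatures: "finite (signatures A B)" by (simp add: signatures_def finite_coords)

lemma signature_mem: "signature A B s \<in> signatures A B" by (auto simp: signature_def signatures_def count_support_def canon_status_less)

lemma count_support_snoc:
  assumes wfA: "dfa_wf A" and wfB: "dfa_wf B"
  shows "count_support A B (s @ [c]) = support_step A B (count_support A B s) c"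
proof -
  have key: "i \<in> coords A B \<Longrightarrow> count_vec A B (s @ [c]) i \<noteq> 0 \<longleftrightarrow> (\<exists>j\<in>count_support A B s. transfer A B c i j \<noteq> 0)" for i
    using count_vec_snoc[OF wfA wfB] by (auto simp: count_support_def finite_coords)
  show ?thesis unfolding support_step_def count_support_def[of A B "s @ [c]"] using key by blast
qed

lemma signature_snoc: "dfa_wf A \<Longrightarrow> dfa_wf B \<Longrightarrow> signature A B (s @ [c]) = signature_step A B (signature A B s) c"
  by (simp add: signature_def signature_step_def count_support_snoc canon_status_snoc)

type_synonym lvec = "sig \<times> coord \<Rightarrow> real"

text \<open>The support of the count vector and the canonicity status of s evolve by a finite automaton.
  Indexing the counts additionally by this signature makes the evolution still linear, while
  \<open>fibers disagree\<close> becomes the nonvanishing of a linear functional.\<close>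
definition lifted_vec :: "dfa \<Rightarrow> dfa \<Rightarrow> bool list \<Rightarrow> lvec" where
  "lifted_vec A B s p = (if fst p = signature A B s \<and> snd p \<in> coords A B then real (count_vec A B s (snd p)) else 0)"

definition lifted_step :: "dfa \<Rightarrow> dfa \<Rightarrow> bool \<Rightarrow> lvec \<Rightarrow> lvec" where
  "lifted_step A B c X p = (if snd p \<in> coords A B then
     (\<Sum>\<tau>\<in>signatures A B. if signature_step A B \<tau> c = fst p then (\<Sum>j\<in>coords A B. real (transfer A B c (snd p) j) * X (\<tau>, j)) else 0) else 0)"

lemma lifted_step_add: "lifted_step A B c (x + y) = lifted_step A B c x + lifted_step A B c y"
  by (auto simp: fun_eq_iff lifted_step_def plus_fun_def algebra_simps sum.distrib[symmetric] intro!: sum.cong)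

lemma lifted_step_scale: "lifted_step A B c (\<lambda>i. r * x i) = (\<lambda>i. r * lifted_step A B c x i)"
  by (auto simp: fun_eq_iff lifted_step_def sum_distrib_left algebra_simps intro!: sum.cong)

lemma lifted_vec_snoc:
  assumes wfA: "dfa_wf A" and wfB: "dfa_wf B"
  shows "lifted_vec A B (s @ [c]) = lifted_step A B c (lifted_vec A B s)"
proof
  fix p :: "sig \<times> coord"
  obtain \<tau>' i where p: "p = (\<tau>', i)" by (cases p) auto
  show "lifted_vec A B (s @ [c]) p = lifted_step A B c (lifted_vec A B s) p"
  proof (cases "i \<in> coords A B")
    case False then show ?thesis by (simp add: p lifted_vec_def lifted_step_def)
  next
    case True
    have "lifted_step A B c (lifted_vec A B s) p = (\<Sum>\<tau>\<in>signatures A B. if \<tau> = signature A B s then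
        (if signature_step A B \<tau> c = \<tau>' then (\<Sum>j\<in>coords A B. real (transfer A B c i j) * real (count_vec A B s j)) else 0) else 0)"
      using True by (auto simp: p lifted_step_def lifted_vec_def intro!: sum.cong)
    also have "\<dots> = (if signature_step A B (signature A B s) c = \<tau>' then (\<Sum>j\<in>coords A B. real (transfer A B c i j) * real (count_vec A B s j)) else 0)"
      using signature_mem[of A B s] by (simp add: finite_signatures)
    also have "\<dots> = lifted_vec A B (s @ [c]) p"
      using True count_vec_snoc[OF wfA wfB True, of s c] by (simp add: p lifted_vec_def signature_snoc[OF wfA wfB])
    finally show ?thesis by simp
  qed
qed

lemma foldl_lifted_step:
  assumes wfA: "dfa_wf A" and wfB: "dfa_wf B"
  shows "foldl (\<lambda>x c. lifted_step A B c x) (lifted_vec A B []) s = lifted_vec A B s"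
proof (induction s rule: rev_induct)
  case Nil then show ?case by simp
next
  case (snoc c s) then show ?case by (simp add: lifted_vec_snoc[OF wfA wfB])
qed

definition unit_vecs :: "dfa \<Rightarrow> dfa \<Rightarrow> lvec set" where
  "unit_vecs A B = (\<lambda>p q. if q = p then 1 else 0) ` (signatures A B \<times> coords A B)"

lemma sum_fun_apply: "(\<Sum>p\<in>P. f p) q = (\<Sum>p\<in>P. f p q)"
  by (induction P rule: infinite_finite_induct) (auto simp: plus_fun_def zero_fun_def)

lemma lifted_vec_in_span: "lifted_vec A B s \<in> fun_space.span (unit_vecs A B)"
proof -
  let ?e = "\<lambda>p q. if q = p then 1 else (0::real)"
  have "lifted_vec A B s = (\<Sum>p\<in>signatures A B \<times> coords A B. (\<lambda>q. lifted_vec A B s p * ?e p q))"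
  proof
    fix q
    have "(\<Sum>p\<in>signatures A B \<times> coords A B. (\<lambda>q. lifted_vec A B s p * ?e p q)) q = (\<Sum>p\<in>signatures A B \<times> coords A B. lifted_vec A B s p * ?e p q)"
      by (rule sum_fun_apply)
    also have "\<dots> = (\<Sum>p\<in>signatures A B \<times> coords A B. if q = p then lifted_vec A B s p else 0)"
      by (rule sum.cong) auto
    also have "\<dots> = (if q \<in> signatures A B \<times> coords A B then lifted_vec A B s q else 0)"
      by (simp add: finite_signatures finite_coords)
    also have "\<dots> = lifted_vec A B s q"
      using signature_mem[of A B s] by (cases q) (auto simp: lifted_vec_def)
    finally show "lifted_vec A B s q = (\<Sum>p\<in>signatures A B \<times> coords A B. (\<lambda>q. lifted_vec A B s p * ?e p q)) q" by simp
  qed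
  also have "\<dots> \<in> fun_space.span (unit_vecs A B)"
  proof (rule fun_space.span_sum)
    fix p assume "p \<in> signatures A B \<times> coords A B"
    then have "?e p \<in> fun_space.span (unit_vecs A B)" by (intro fun_space.span_base) (auto simp: unit_vecs_def)
    then show "(\<lambda>q. lifted_vec A B s p * ?e p q) \<in> fun_space.span (unit_vecs A B)" by (rule fun_space.span_scale)
  qed
  finally show ?thesis .
qed

lemma card_unit_vecs_le:
  "card (unit_vecs A B) \<le> 4 * 2 ^ (4 * (nstates A + nstates B)) * (4 * (nstates A + nstates B))"
proof -
  have "card (unit_vecs A B) \<le> card (signatures A B \<times> coords A B)"
    unfolding unit_vecs_def by (rule card_image_le) (simp add: finite_signatures finite_coords)
  also have "\<dots> = card (signatures A B) * card (coords A B)" by (simp add: card_cartesian_product)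
  also have "card (signatures A B) = 2 ^ card (coords A B) * 4"
    by (simp add: signatures_def card_cartesian_product card_Pow finite_coords)
  finally show ?thesis by (simp add: card_coords mult.commute mult.left_commute)
qed

definition has_far_weight :: "dfa \<Rightarrow> dfa \<Rightarrow> bool \<Rightarrow> coord set \<Rightarrow> bool" where
  "has_far_weight A B x S \<longleftrightarrow> (\<exists>i\<in>S. final_weight A B x True i \<noteq> 0)"

definition both_finite_signatures :: "dfa \<Rightarrow> dfa \<Rightarrow> sig set" where
  "both_finite_signatures A B =
    {\<tau>. snd \<tau> \<noteq> 3 \<and> \<not> has_far_weight A B True (fst \<tau>) \<and> \<not> has_far_weight A B False (fst \<tau>)}"
definition one_infinite_signatures :: "dfa \<Rightarrow> dfa \<Rightarrow> sig set" where
  "one_infinite_signatures A B =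
    {\<tau>. snd \<tau> \<noteq> 3 \<and> (has_far_weight A B True (fst \<tau>) \<noteq> has_far_weight A B False (fst \<tau>))}"

definition diff_weight :: "dfa \<Rightarrow> dfa \<Rightarrow> coord \<Rightarrow> real" where
  "diff_weight A B i = real (final_weight A B True False i) - real (final_weight A B False False i)"

definition count_defect :: "dfa \<Rightarrow> dfa \<Rightarrow> lvec \<Rightarrow> real" where
  "count_defect A B X =
    (\<Sum>\<tau>\<in>signatures A B \<inter> both_finite_signatures A B. \<Sum>i\<in>coords A B. diff_weight A B i * X (\<tau>, i))"
definition finiteness_defect :: "dfa \<Rightarrow> dfa \<Rightarrow> lvec \<Rightarrow> real" where
  "finiteness_defect A B X =
    (\<Sum>\<tau>\<in>signatures A B \<inter> one_infinite_signatures A B. \<Sum>i\<in>coords A B. X (\<tau>, i))"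

lemma count_defect_add: "count_defect A B (x + y) = count_defect A B x + count_defect A B y"
  by (simp add: count_defect_def plus_fun_def algebra_simps sum.distrib)
lemma count_defect_scale: "count_defect A B (\<lambda>i. r * x i) = r * count_defect A B x"
  by (simp add: count_defect_def sum_distrib_left algebra_simps)
lemma finiteness_defect_add: "finiteness_defect A B (x + y) = finiteness_defect A B x + finiteness_defect A B y"
  by (simp add: finiteness_defect_def plus_fun_def algebra_simps sum.distrib)
lemma finiteness_defect_scale: "finiteness_defect A B (\<lambda>i. r * x i) = r * finiteness_defect A B x"
  by (simp add: finiteness_defect_def sum_distrib_left algebra_simps)

lemma count_defect_lifted_vec:
  "count_defect A B (lifted_vec A B s) = (if signature A B s \<in> both_finite_signatures A B
     then (\<Sum>i\<in>coords A B. diff_weight A B i * real (count_vec A B s i)) else 0)"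
proof -
  let ?c = "\<Sum>i\<in>coords A B. diff_weight A B i * real (count_vec A B s i)"
  have "count_defect A B (lifted_vec A B s) =
      (\<Sum>\<tau>\<in>signatures A B \<inter> both_finite_signatures A B. if signature A B s = \<tau> then ?c else 0)"
    unfolding count_defect_def by (rule sum.cong) (auto simp: lifted_vec_def intro!: sum.cong)
  also have "\<dots> = (if signature A B s \<in> signatures A B \<inter> both_finite_signatures A B then ?c else 0)"
    by (rule sum.delta') (simp add: finite_signatures)
  finally show ?thesis using signature_mem[of A B s] by simp
qed

lemma finiteness_defect_lifted_vec:
  "finiteness_defect A B (lifted_vec A B s) = (if signature A B s \<in> one_infinite_signatures A B
     then (\<Sum>i\<in>coords A B. real (count_vec A B s i)) else 0)"
proof -
  let ?c = "\<Sum>i\<in>coords A B. real (count_vec A B s i)"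
  have "finiteness_defect A B (lifted_vec A B s) =
      (\<Sum>\<tau>\<in>signatures A B \<inter> one_infinite_signatures A B. if signature A B s = \<tau> then ?c else 0)"
    unfolding finiteness_defect_def by (rule sum.cong) (auto simp: lifted_vec_def intro!: sum.cong)
  also have "\<dots> = (if signature A B s \<in> signatures A B \<inter> one_infinite_signatures A B then ?c else 0)"
    by (rule sum.delta') (simp add: finite_signatures)
  finally show ?thesis using signature_mem[of A B s] by simp
qed

lemma final_weight_le_1: "final_weight A B x g i \<le> 1" by (cases i) (simp add: final_weight_def)

lemma has_far_weight_count_support:
  "has_far_weight A B x (count_support A B s) \<longleftrightarrow> (\<Sum>i\<in>coords A B. final_weight A B x True i * count_vec A B s i) \<noteq> 0"
  by (auto simp: has_far_weight_def count_support_def finite_coords)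

lemma diff_weight_sum: "(\<Sum>i\<in>coords A B. diff_weight A B i * real (count_vec A B s i)) =
    real (\<Sum>i\<in>coords A B. final_weight A B True False i * count_vec A B s i)
    - real (\<Sum>i\<in>coords A B. final_weight A B False False i * count_vec A B s i)"
  by (simp add: diff_weight_def algebra_simps sum_subtractf)

lemma weighted_sum_le:
  "(\<Sum>i\<in>coords A B. final_weight A B x g i * count_vec A B s i) \<le> (\<Sum>i\<in>coords A B. count_vec A B s i)"
  by (rule sum_mono) (use final_weight_le_1 in \<open>simp add: mult_le_cancel2\<close>)

lemma pick_dfa_simps[simp]: "pick_dfa A B True = A" "pick_dfa A B False = B" by (simp_all add: pick_dfa_def)

lemma fibers_disagree_iff_defect:
  assumes sa: "fib_synchronized_by A a" and sb: "fib_synchronized_by B b"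
  shows "\<not> code_fibers_agree (dfa_code A) (dfa_code B) v \<longleftrightarrow>
    count_defect A B (lifted_vec A B (fib_rep v)) \<noteq> 0 \<or> finiteness_defect A B (lifted_vec A B (fib_rep v)) \<noteq> 0"
proof -
  let ?s = "fib_rep v"
  have wfA: "dfa_wf A" and wfB: "dfa_wf B" using sa sb synchronized_wf by auto
  define iA where "iA = (\<Sum>i\<in>coords A B. final_weight A B True True i * count_vec A B ?s i)"
  define iB where "iB = (\<Sum>i\<in>coords A B. final_weight A B False True i * count_vec A B ?s i)"
  define cA where "cA = (\<Sum>i\<in>coords A B. final_weight A B True False i * count_vec A B ?s i)"
  define cB where "cB = (\<Sum>i\<in>coords A B. final_weight A B False False i * count_vec A B ?s i)"
  have e1: "code_far_count (dfa_code A) (length ?s) v = iA"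
    using code_far_count_eq_accepted_count[OF sa, of v] accepted_count_eq_weighted_sum[OF wfA wfB, of True True ?s]
    by (simp add: iA_def window_lo_def window_hi_def pump_gap_def)
  have e2: "code_far_count (dfa_code B) (length ?s) v = iB"
    using code_far_count_eq_accepted_count[OF sb, of v] accepted_count_eq_weighted_sum[OF wfA wfB, of False True ?s]
    by (simp add: iB_def window_lo_def window_hi_def pump_gap_def)
  have e3: "code_near_count (dfa_code A) (length ?s) v = cA"
    using code_near_count_eq_accepted_count[OF sa, of v] accepted_count_eq_weighted_sum[OF wfA wfB, of True False ?s]
    by (simp add: cA_def window_lo_def window_hi_def pump_gap_def)
  have e4: "code_near_count (dfa_code B) (length ?s) v = cB"
    using code_near_count_eq_accepted_count[OF sb, of v] accepted_count_eq_weighted_sum[OF wfA wfB, of False False ?s]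
    by (simp add: cB_def window_lo_def window_hi_def pump_gap_def)
  have eq: "code_fibers_agree (dfa_code A) (dfa_code B) v \<longleftrightarrow> (iA \<noteq> 0 \<and> iB \<noteq> 0) \<or> (iA = 0 \<and> iB = 0 \<and> cA = cB)"
    using e1 e2 e3 e4 by (simp add: code_fibers_agree_def Let_def rep_length_eq)
  have canon: "canon_status ?s \<noteq> 3" using canon_status_iff canonical_fib_rep by blast
  have good: "signature A B ?s \<in> both_finite_signatures A B \<longleftrightarrow> iA = 0 \<and> iB = 0"
    using canon by (simp add: both_finite_signatures_def signature_def has_far_weight_count_support iA_def iB_def)
  have bad: "signature A B ?s \<in> one_infinite_signatures A B \<longleftrightarrow> (iA \<noteq> 0) \<noteq> (iB \<noteq> 0)"
    using canon by (simp add: one_infinite_signatures_def signature_def has_far_weight_count_support iA_def iB_def)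
  have ls: "(\<Sum>i\<in>coords A B. diff_weight A B i * real (count_vec A B ?s i)) = real cA - real cB"
    unfolding cA_def cB_def by (rule diff_weight_sum)
  have p1: "count_defect A B (lifted_vec A B ?s) \<noteq> 0 \<longleftrightarrow> iA = 0 \<and> iB = 0 \<and> cA \<noteq> cB"
    using good by (simp add: count_defect_lifted_vec ls)
  have "iA \<le> (\<Sum>i\<in>coords A B. count_vec A B ?s i)" "iB \<le> (\<Sum>i\<in>coords A B. count_vec A B ?s i)"
    unfolding iA_def iB_def by (rule weighted_sum_le)+
  then have p2: "finiteness_defect A B (lifted_vec A B ?s) \<noteq> 0 \<longleftrightarrow> (iA \<noteq> 0) \<noteq> (iB \<noteq> 0)"
    using bad by (auto simp: finiteness_defect_lifted_vec simp flip: of_nat_sum)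
  show ?thesis using eq p1 p2 by auto
qed

lemma defects_noncanonical:
  "\<not> canonical s \<Longrightarrow> count_defect A B (lifted_vec A B s) = 0 \<and> finiteness_defect A B (lifted_vec A B s) = 0"
  using canon_status_iff[of s]
  by (simp add: count_defect_lifted_vec finiteness_defect_lifted_vec signature_def
      both_finite_signatures_def one_infinite_signatures_def)

lemma short_word_lifted_functional_nonzero:
  assumes wfA: "dfa_wf A" and wfB: "dfa_wf B"
    and Padd: "\<And>x y. P (x + y) = P x + P y" and Psc: "\<And>r x. P (\<lambda>i. r * x i) = r * P x"
    and ex: "P (lifted_vec A B s0) \<noteq> 0"
  shows "\<exists>s. length s \<le> card (unit_vecs A B) \<and> P (lifted_vec A B s) \<noteq> 0"
proof -
  have fold: "foldl (\<lambda>x c. lifted_step A B c x) (lifted_vec A B []) s = lifted_vec A B s" for s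
    by (rule foldl_lifted_step[OF wfA wfB])
  have "\<exists>s. length s \<le> card (unit_vecs A B) \<and> P (foldl (\<lambda>x c. lifted_step A B c x) (lifted_vec A B []) s) \<noteq> 0"
  proof (rule short_word_functional_nonzero[where L = "lifted_step A B"])
    show "finite (unit_vecs A B)" by (simp add: unit_vecs_def finite_signatures finite_coords)
    show "foldl (\<lambda>x c. lifted_step A B c x) (lifted_vec A B []) s \<in> fun_space.span (unit_vecs A B)" for s
      by (simp add: fold lifted_vec_in_span)
    show "P (foldl (\<lambda>x c. lifted_step A B c x) (lifted_vec A B []) s0) \<noteq> 0" using ex by (simp add: fold)
  qed (fact lifted_step_add lifted_step_scale Padd Psc)+
  then show ?thesis by (simp add: fold)
qed

lemma short_word_defect:
  assumes wfA: "dfa_wf A" and wfB: "dfa_wf B"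
    and "count_defect A B (lifted_vec A B s0) \<noteq> 0 \<or> finiteness_defect A B (lifted_vec A B s0) \<noteq> 0"
  shows "\<exists>s. length s \<le> card (unit_vecs A B) \<and>
    (count_defect A B (lifted_vec A B s) \<noteq> 0 \<or> finiteness_defect A B (lifted_vec A B s) \<noteq> 0)"
  using assms(3) short_word_lifted_functional_nonzero[OF wfA wfB, of "count_defect A B"]
    short_word_lifted_functional_nonzero[OF wfA wfB, of "finiteness_defect A B"]
  by (metis count_defect_add count_defect_scale finiteness_defect_add finiteness_defect_scale)

section \<open>The decision procedure\<close>

text \<open>The bound on \<open>card (unit_vecs A B)\<close>, computed from the codes.\<close>
definition code_search_bound :: "nat \<Rightarrow> nat \<Rightarrow> nat" where
  "code_search_bound cA cB = (let D = 4 * (code_nth cA 0 + code_nth cB 0) in 4 * 2 ^ D * D)"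

text \<open>Phrased as the sum that \<open>r_decide_perm\<close> computes; \<open>code_decide_perm_eq\<close> gives the intended reading.\<close>
definition code_decide_perm :: "nat \<Rightarrow> nat \<Rightarrow> nat" where
  "code_decide_perm cA cB =
    (if (\<Sum>v<fib (code_search_bound cA cB + 2). 1 - (if code_fibers_agree cA cB v then 1 else 0 :: nat)) = 0 then 1 else 0)"

definition r_decide_perm :: recf where
  "r_decide_perm = (let D = Comp r_mult [r_const 4, Comp r_add [Comp r_code_nth [Proj 0, r_const 0], Comp r_code_nth [Proj 1, r_const 0]]];
   K = Comp r_mult [Comp r_mult [r_const 4, Comp r_pow2 [D]], D] in
   Comp r_is_zero [Comp (r_sum_below (Suc (Suc 0)) (Comp r_sub [r_const 1, Comp r_code_fibers_agree [Proj 1, Proj 2, Proj 0]]))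
     [Comp r_fib [Comp r_add [K, r_const 2]], Proj 0, Proj 1]])"
lemma r_decide_perm_arity[simp]: "prim_of_arity r_decide_perm (Suc (Suc 0))" by (simp add: r_decide_perm_def Let_def)
lemma r_decide_perm_val[simp]: "prim_val r_decide_perm [cA, cB] = code_decide_perm cA cB"
  by (simp add: r_decide_perm_def code_decide_perm_def code_search_bound_def Let_def)

lemma code_decide_perm_eq:
  "code_decide_perm cA cB = (if \<forall>v<fib (code_search_bound cA cB + 2). code_fibers_agree cA cB v then 1 else 0)"
  by (simp add: code_decide_perm_def)

lemma rf_eval_r_decide_perm: "rf_eval r_decide_perm [cA, cB] (code_decide_perm cA cB)"
  using rf_eval_prim_val[of r_decide_perm "[cA, cB]"] by simp

lemma code_search_bound_dfa_code:
  assumes "dfa_wf A" "dfa_wf B"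
  shows "code_search_bound (dfa_code A) (dfa_code B) = 4 * 2 ^ (4 * (nstates A + nstates B)) * (4 * (nstates A + nstates B))"
  using assms by (simp add: code_search_bound_def code_nth_dfa_code(1) Let_def)

lemma fibers_agree_if_agree_below:
  assumes sa: "fib_synchronized_by A a" and sb: "fib_synchronized_by B b"
    and small: "\<forall>v<fib (code_search_bound (dfa_code A) (dfa_code B) + 2). code_fibers_agree (dfa_code A) (dfa_code B) v"
  shows "code_fibers_agree (dfa_code A) (dfa_code B) v"
proof (rule ccontr)
  assume "\<not> code_fibers_agree (dfa_code A) (dfa_code B) v"
  moreover have wfA: "dfa_wf A" and wfB: "dfa_wf B" using sa sb synchronized_wf by auto
  ultimately obtain s where s: "length s \<le> card (unit_vecs A B)"
    and defect: "count_defect A B (lifted_vec A B s) \<noteq> 0 \<or> finiteness_defect A B (lifted_vec A B s) \<noteq> 0"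
    using short_word_defect fibers_disagree_iff_defect[OF sa sb] by metis
  then have "fib_rep (zeck_val s) = s" using defects_noncanonical fib_rep_zeck_val by blast
  then have "\<not> code_fibers_agree (dfa_code A) (dfa_code B) (zeck_val s)"
    and "length (fib_rep (zeck_val s)) \<le> code_search_bound (dfa_code A) (dfa_code B)"
    using fibers_disagree_iff_defect[OF sa sb, of "zeck_val s"] defect s card_unit_vecs_le[of A B]
    by (simp_all add: code_search_bound_dfa_code[OF wfA wfB])
  then show False using small less_fib_iff_length_fib_rep by blast
qed

lemma code_decide_perm_correct:
  assumes sa: "fib_synchronized_by A a" and sb: "fib_synchronized_by B b"
  shows "code_decide_perm (dfa_code A) (dfa_code B) = (if is_perm_of a b then 1 else 0)"
proof -
  have "is_perm_of a b \<longleftrightarrow> (\<forall>v. code_fibers_agree (dfa_code A) (dfa_code B) v)"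
    using is_perm_of_iff_same_fiber_card code_fibers_agree_iff[OF sa sb] by blast
  then show ?thesis
    using fibers_agree_if_agree_below[OF sa sb] by (auto simp: code_decide_perm_eq)
qed

theorem theorem10:
  shows "\<exists>f :: recf. \<forall>A B a b.
           fib_synchronized_by A a \<longrightarrow> fib_synchronized_by B b \<longrightarrow>
           rf_eval f [dfa_code A, dfa_code B] (if is_perm_of a b then 1 else 0)"
proof (intro exI allI impI)
  fix A B a b
  assume "fib_synchronized_by A a" "fib_synchronized_by B b"
  then show "rf_eval r_decide_perm [dfa_code A, dfa_code B] (if is_perm_of a b then 1 else 0)"
    using rf_eval_r_decide_perm[of "dfa_code A" "dfa_code B"] code_decide_perm_correct by simp
qed

end
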